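(* For the algorithm OptPess-PrimalDual, with probability at least $1-\delta$, $$\sum_{k=C''}^K\left(V_1^{\pi^{\epsilon_k,*}}(\mu;r,P)-\hat V_1^{\pi^{\epsilon_k,*}}(\mu;\tilde r^k,\hat P^k)\right)\le0.$$
   Context: Episodic constrained MDP. $\mathcal S,\mathcal A$ finite, $H\ge1$ integer. For each $h\in[H]$, $(s,a)$: unknown transition distribution $P_h(\cdot\mid s,a)$, unknown mean reward $r_h(s,a)\in[0,1]$, unknown mean cost $c_h(s,a)\in[0,1]$. Known initial distribution $\mu$, threshold $\tau\in(0,H]$. Policies are randomized Markov. $V_h^\pi(s;g,P'):=\mathbb E_{P',\pi}[\sum_{t=h}^Hg_t(S_t,A_t)\mid S_h=s]$, $V_1^\pi(\mu;g,P'):=\mathbb E_{S_1\sim\mu}V_1^\pi(S_1;g,P')$. There exists a policy $\pi^0$ with $V_1^{\pi^0}(\mu;c,P)=c^0<\tau$, $c^0$ known. Interaction over $K$ episodes: in episode $k$, $\pi^k$ depends only on previous data; $S_1^k\sim\mu$, $A_h^k\sim\pi_h^k(\cdot\mid S_h^k)$, observed $R_h^k=r_h(S_h^k,A_h^k)+\text{noise}$, $C_h^k=c_h(S_h^k,A_h^k)+\text{noise}$, $S_{h+1}^k\sim P_h(\cdot\mid S_h^k,A_h^k)$; $\mathcal F_k$ generated by all observations of episodes $1..k$; noises conditionally independent, zero mean, $\mathbb E[e^{\lambda\xi}\mid\mathcal F_{k-1}]\le e^{\lambda^2/4}$ for all real $\lambda$. Estimates: $N_h^k(s,a)$ = visits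 of $(s,a)$ at step $h$ in episodes $1..k-1$; $\hat P_h^k,\hat r_h^k,\hat c_h^k$ empirical transition frequencies and means (denominator $N_h^k(s,a)\vee1$); $Z:=\log(16|\mathcal S|^2|\mathcal A|HK/\delta)$, $\beta_h^k(s,a):=\sqrt{Z/(N_h^k(s,a)\vee1)}$, $\delta\in(0,1)$. OptPess-PrimalDual: $\delta'=\delta/(16|\mathcal S|^2|\mathcal A|H)$, $\epsilon_k:=5H^2\sqrt{|\mathcal S|^3|\mathcal A|}(\log\frac{k}{\delta'}+1)/\sqrt{k\log\frac{k}{\delta'}}$, $\eta^k:=(\tau-c^0)H\sqrt k$; $\tilde r_h^k:=\hat r_h^k+(1+H|\mathcal S|)\beta_h^k$, $\tilde c_h^k:=\hat c_h^k-(1+H|\mathcal S|)\beta_h^k$; $\hat V_1^\pi(\mu;\tilde r^k,\hat P^k):=\min\{H,V_1^\pi(\mu;\tilde r^k,\hat P^k)\}$, $\hat V_1^\pi(\mu;\tilde c^k,\hat P^k):=\max\{0,V_1^\pi(\mu;\tilde c^k,\hat P^k)\}$. $\lambda^1=0$; $\pi^k\in\arg\max_\pi\hat V_1^\pi(\mu;\tilde r^k,\hat P^k)-\frac{\lambda^k}{\eta^k}(\hat V_1^\pi(\mu;\tilde c^k,\hat P^k)-\tau)$; $\lambda^{k+1}=(\lambda^k+\hat V_1^{\pi^k}(\mu;\tilde c^k,\hat P^k)+\epsilon_k-\tau)_+$. $C''$ is the smallest positive integer such that $\epsilon_k\le(\tau-c^0)/2$ for all $k\ge C''$. For $k\ge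 C''$, $\pi^{\epsilon_k,*}$ is an optimal policy of $\max_\pi V_1^\pi(\mu;r,P)$ s.t. $V_1^\pi(\mu;c,P)+\epsilon_k\le\tau$. *)

theory Defs
  imports "HOL-Probability.Probability"
begin

type_synonym ('s, 'a) policy = "nat \<Rightarrow> 's \<Rightarrow> 'a pmf"

text \<open>Backward (Bellman) recursion; m = number of remaining steps.
  Works for the (possibly substochastic) empirical kernel as well.\<close>
primrec Vaux :: "nat \<Rightarrow> ('s::finite, 'a::finite) policy \<Rightarrow> (nat \<Rightarrow> 's \<Rightarrow> 'a \<Rightarrow> real)
    \<Rightarrow> (nat \<Rightarrow> 's \<Rightarrow> 'a \<Rightarrow> 's \<Rightarrow> real) \<Rightarrow> nat \<Rightarrow> 's \<Rightarrow> real" where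
  "Vaux 0 \<pi> g P h s = 0"
| "Vaux (Suc m) \<pi> g P h s =
     (\<Sum>a\<in>UNIV. pmf (\<pi> h s) a * (g h s a + (\<Sum>s'\<in>UNIV. P h s a s' * Vaux m \<pi> g P (Suc h) s')))"

text \<open>V_h^pi(s; g, P') = E[ sum_{t=h}^H g_t(S_t,A_t) | S_h = s ].\<close>
definition Vh :: "nat \<Rightarrow> ('s::finite, 'a::finite) policy \<Rightarrow> (nat \<Rightarrow> 's \<Rightarrow> 'a \<Rightarrow> real)
    \<Rightarrow> (nat \<Rightarrow> 's \<Rightarrow> 'a \<Rightarrow> 's \<Rightarrow> real) \<Rightarrow> nat \<Rightarrow> 's \<Rightarrow> real" where
  "Vh H \<pi> g P h s = Vaux (H + 1 - h) \<pi> g P h s"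

definition V1 :: "nat \<Rightarrow> ('s::finite, 'a::finite) policy \<Rightarrow> (nat \<Rightarrow> 's \<Rightarrow> 'a \<Rightarrow> real)
    \<Rightarrow> (nat \<Rightarrow> 's \<Rightarrow> 'a \<Rightarrow> 's \<Rightarrow> real) \<Rightarrow> 's pmf \<Rightarrow> real" where
  "V1 H \<pi> g P \<mu> = (\<Sum>s\<in>UNIV. pmf \<mu> s * Vh H \<pi> g P 1 s)"

definition kern :: "(nat \<Rightarrow> 's \<Rightarrow> 'a \<Rightarrow> 's pmf) \<Rightarrow> nat \<Rightarrow> 's \<Rightarrow> 'a \<Rightarrow> 's \<Rightarrow> real" where
  "kern P h s a s' = pmf (P h s a) s'"

section \<open>Empirical estimates (Sd, Ad, Gd: observed data, indexed by episode and step)\<close>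

definition Ncnt :: "(nat \<Rightarrow> nat \<Rightarrow> 's) \<Rightarrow> (nat \<Rightarrow> nat \<Rightarrow> 'a) \<Rightarrow> nat \<Rightarrow> nat \<Rightarrow> 's \<Rightarrow> 'a \<Rightarrow> nat" where
  "Ncnt Sd Ad k h s a = card {j \<in> {1..<k}. Sd j h = s \<and> Ad j h = a}"

definition Phat :: "(nat \<Rightarrow> nat \<Rightarrow> 's) \<Rightarrow> (nat \<Rightarrow> nat \<Rightarrow> 'a) \<Rightarrow> nat \<Rightarrow> nat \<Rightarrow> 's \<Rightarrow> 'a \<Rightarrow> 's \<Rightarrow> real" where
  "Phat Sd Ad k h s a s' =
     real (card {j \<in> {1..<k}. Sd j h = s \<and> Ad j h = a \<and> Sd j (Suc h) = s'})
     / real (max 1 (Ncnt Sd Ad k h s a))"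

definition ghat :: "(nat \<Rightarrow> nat \<Rightarrow> real) \<Rightarrow> (nat \<Rightarrow> nat \<Rightarrow> 's) \<Rightarrow> (nat \<Rightarrow> nat \<Rightarrow> 'a) \<Rightarrow> nat \<Rightarrow> nat \<Rightarrow> 's \<Rightarrow> 'a \<Rightarrow> real" where
  "ghat Gd Sd Ad k h s a =
     (\<Sum>j \<in> {j \<in> {1..<k}. Sd j h = s \<and> Ad j h = a}. Gd j h)
     / real (max 1 (Ncnt Sd Ad k h s a))"

definition beta :: "nat \<Rightarrow> nat \<Rightarrow> real \<Rightarrow> (nat \<Rightarrow> nat \<Rightarrow> 's::finite) \<Rightarrow> (nat \<Rightarrow> nat \<Rightarrow> 'a::finite)
    \<Rightarrow> nat \<Rightarrow> nat \<Rightarrow> 's \<Rightarrow> 'a \<Rightarrow> real" where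
  "beta H K \<delta> Sd Ad k h s a =
     sqrt (ln (16 * real CARD('s) ^ 2 * real CARD('a) * real H * real K / \<delta>)
           / real (max 1 (Ncnt Sd Ad k h s a)))"

definition rtilde :: "nat \<Rightarrow> nat \<Rightarrow> real \<Rightarrow> (nat \<Rightarrow> nat \<Rightarrow> 's::finite) \<Rightarrow> (nat \<Rightarrow> nat \<Rightarrow> 'a::finite)
    \<Rightarrow> (nat \<Rightarrow> nat \<Rightarrow> real) \<Rightarrow> nat \<Rightarrow> nat \<Rightarrow> 's \<Rightarrow> 'a \<Rightarrow> real" where
  "rtilde H K \<delta> Sd Ad Rd k h s a =
     ghat Rd Sd Ad k h s a + (1 + real H * real CARD('s)) * beta H K \<delta> Sd Ad k h s a"

definition ctilde :: "nat \<Rightarrow> nat \<Rightarrow> real \<Rightarrow> (nat \<Rightarrow> nat \<Rightarrow> 's::finite) \<Rightarrow> (nat \<Rightarrow> nat \<Rightarrow> 'a::finite)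
    \<Rightarrow> (nat \<Rightarrow> nat \<Rightarrow> real) \<Rightarrow> nat \<Rightarrow> nat \<Rightarrow> 's \<Rightarrow> 'a \<Rightarrow> real" where
  "ctilde H K \<delta> Sd Ad Cd k h s a =
     ghat Cd Sd Ad k h s a - (1 + real H * real CARD('s)) * beta H K \<delta> Sd Ad k h s a"

definition Vr_hat :: "nat \<Rightarrow> nat \<Rightarrow> real \<Rightarrow> (nat \<Rightarrow> nat \<Rightarrow> 's::finite) \<Rightarrow> (nat \<Rightarrow> nat \<Rightarrow> 'a::finite)
    \<Rightarrow> (nat \<Rightarrow> nat \<Rightarrow> real) \<Rightarrow> 's pmf \<Rightarrow> nat \<Rightarrow> ('s, 'a) policy \<Rightarrow> real" where
  "Vr_hat H K \<delta> Sd Ad Rd \<mu> k \<pi> =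
     min (real H) (V1 H \<pi> (rtilde H K \<delta> Sd Ad Rd k) (Phat Sd Ad k) \<mu>)"

definition Vc_hat :: "nat \<Rightarrow> nat \<Rightarrow> real \<Rightarrow> (nat \<Rightarrow> nat \<Rightarrow> 's::finite) \<Rightarrow> (nat \<Rightarrow> nat \<Rightarrow> 'a::finite)
    \<Rightarrow> (nat \<Rightarrow> nat \<Rightarrow> real) \<Rightarrow> 's pmf \<Rightarrow> nat \<Rightarrow> ('s, 'a) policy \<Rightarrow> real" where
  "Vc_hat H K \<delta> Sd Ad Cd \<mu> k \<pi> =
     max 0 (V1 H \<pi> (ctilde H K \<delta> Sd Ad Cd k) (Phat Sd Ad k) \<mu>)"

definition eps :: "nat \<Rightarrow> nat \<Rightarrow> nat \<Rightarrow> real \<Rightarrow> nat \<Rightarrow> real" where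
  "eps nS nA H \<delta> k =
     (let \<delta>' = \<delta> / (16 * real nS ^ 2 * real nA * real H) in
      5 * real H ^ 2 * sqrt (real nS ^ 3 * real nA) * (ln (real k / \<delta>') + 1)
      / sqrt (real k * ln (real k / \<delta>')))"

definition eta :: "real \<Rightarrow> real \<Rightarrow> nat \<Rightarrow> nat \<Rightarrow> real" where
  "eta \<tau> c0 H k = (\<tau> - c0) * real H * sqrt (real k)"

definition Cpp :: "nat \<Rightarrow> nat \<Rightarrow> nat \<Rightarrow> real \<Rightarrow> real \<Rightarrow> real \<Rightarrow> nat" where
  "Cpp nS nA H \<delta> \<tau> c0 = (LEAST n::nat. 0 < n \<and> (\<forall>k\<ge>n. eps nS nA H \<delta> k \<le> (\<tau> - c0) / 2))"

primrec lam :: "nat \<Rightarrow> nat \<Rightarrow> real \<Rightarrow> real \<Rightarrow> (nat \<Rightarrow> nat \<Rightarrow> 's::finite) \<Rightarrow> (nat \<Rightarrow> nat \<Rightarrow> 'a::finite)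
    \<Rightarrow> (nat \<Rightarrow> nat \<Rightarrow> real) \<Rightarrow> 's pmf \<Rightarrow> (nat \<Rightarrow> ('s, 'a) policy) \<Rightarrow> nat \<Rightarrow> real" where
  "lam H K \<delta> \<tau> Sd Ad Cd \<mu> pols 0 = 0"
| "lam H K \<delta> \<tau> Sd Ad Cd \<mu> pols (Suc k) =
     (if k = 0 then 0
      else max 0 (lam H K \<delta> \<tau> Sd Ad Cd \<mu> pols k + Vc_hat H K \<delta> Sd Ad Cd \<mu> k (pols k)
                  + eps CARD('s) CARD('a) H \<delta> k - \<tau>))"

definition alg_obj :: "nat \<Rightarrow> nat \<Rightarrow> real \<Rightarrow> real \<Rightarrow> real \<Rightarrow> (nat \<Rightarrow> nat \<Rightarrow> 's::finite)
    \<Rightarrow> (nat \<Rightarrow> nat \<Rightarrow> 'a::finite) \<Rightarrow> (nat \<Rightarrow> nat \<Rightarrow> real) \<Rightarrow> (nat \<Rightarrow> nat \<Rightarrow> real) \<Rightarrow> 's pmf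
    \<Rightarrow> (nat \<Rightarrow> ('s, 'a) policy) \<Rightarrow> nat \<Rightarrow> ('s, 'a) policy \<Rightarrow> real" where
  "alg_obj H K \<delta> \<tau> c0 Sd Ad Rd Cd \<mu> pols k \<pi> =
     Vr_hat H K \<delta> Sd Ad Rd \<mu> k \<pi>
     - lam H K \<delta> \<tau> Sd Ad Cd \<mu> pols k / eta \<tau> c0 H k * (Vc_hat H K \<delta> Sd Ad Cd \<mu> k \<pi> - \<tau>)"

text \<open>Within an episode observations are ordered S_1, A_1, R_1, C_1, S_2, A_2, ...\<close>
datatype otype = OS | OA | OR | OC

definition opos :: "nat \<Rightarrow> otype \<Rightarrow> nat" where
  "opos i t = 4 * i + (case t of OS \<Rightarrow> 0 | OA \<Rightarrow> 1 | OR \<Rightarrow> 2 | OC \<Rightarrow> 3)"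

definition ovalid :: "nat \<Rightarrow> nat \<Rightarrow> otype \<Rightarrow> bool" where
  "ovalid H i t = (if t = OS then 1 \<le> i \<and> i \<le> H + 1 else 1 \<le> i \<and> i \<le> H)"

definition obs_gen :: "'x measure \<Rightarrow> (nat \<Rightarrow> nat \<Rightarrow> 'x \<Rightarrow> 's) \<Rightarrow> (nat \<Rightarrow> nat \<Rightarrow> 'x \<Rightarrow> 'a)
    \<Rightarrow> (nat \<Rightarrow> nat \<Rightarrow> 'x \<Rightarrow> real) \<Rightarrow> (nat \<Rightarrow> nat \<Rightarrow> 'x \<Rightarrow> real) \<Rightarrow> nat \<Rightarrow> nat \<Rightarrow> otype \<Rightarrow> 'x set set" where
  "obs_gen M S A R C j i t = (case t of
       OS \<Rightarrow> {S j i -` {s} \<inter> space M | s. True}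
     | OA \<Rightarrow> {A j i -` {a} \<inter> space M | a. True}
     | OR \<Rightarrow> {R j i -` B \<inter> space M | B. B \<in> sets borel}
     | OC \<Rightarrow> {C j i -` B \<inter> space M | B. B \<in> sets borel})"

text \<open>Sigma-algebra generated by all observations of episodes 1..k-1 and by the
  observations of episode k strictly before position p.  hist_sigma .. k 0 is F_{k-1}.\<close>
definition hist_sigma :: "'x measure \<Rightarrow> nat \<Rightarrow> (nat \<Rightarrow> nat \<Rightarrow> 'x \<Rightarrow> 's) \<Rightarrow> (nat \<Rightarrow> nat \<Rightarrow> 'x \<Rightarrow> 'a)
    \<Rightarrow> (nat \<Rightarrow> nat \<Rightarrow> 'x \<Rightarrow> real) \<Rightarrow> (nat \<Rightarrow> nat \<Rightarrow> 'x \<Rightarrow> real) \<Rightarrow> nat \<Rightarrow> nat \<Rightarrow> 'x measure" where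
  "hist_sigma M H S A R C k p = sigma (space M)
     (\<Union>{obs_gen M S A R C j i t | j i t.
          1 \<le> j \<and> ovalid H i t \<and> (j < k \<or> (j = k \<and> opos i t < p))})"

end

theory Submission
  imports Defs
begin

text \<open>
  Let Z = ln (16 |S|^2 |A| H K / \<delta>), so that \<beta> = sqrt (Z / max 1 N).  The centred reward
  observations and the centred next-state indicators at a fixed (h, s, a) are conditionally
  sub-Gaussian (the former by assumption, the latter by Hoeffding's lemma).  An exponential
  supermartingale stopped after the n-th visit, together with Markov's inequality, shows that
  their sum over the first n visits falls below -sqrt (n Z) with probability at most exp (-Z);
  a union bound over the H |S| |A| (|S| + 1) K choices of (h, s, a, s', n) costs at most \<delta>.
  Outside this event every empirical mean is at least its true mean minus \<beta>, so the bonus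
  (1 + H |S|) \<beta> of the optimistic reward pays for the reward error and, since values lie in
  [0, H], for the transition error H \<Sum>_s' (P - P_hat)_+ \<le> H |S| \<beta>.  Backward induction then
  gives V^\<pi>(r, P) \<le> V_hat^\<pi>(r_tilde, P_hat) for every policy \<pi> and every episode, in
  particular for \<pi>^{\<epsilon>_k,*}, so every summand is nonpositive.
\<close>

section \<open>Optimistic value functions\<close>

lemma weighted_sum_bounds:
  fixes p v :: "'s::finite \<Rightarrow> real"
  assumes "\<And>x. 0 \<le> p x" "(\<Sum>x\<in>UNIV. p x) = 1" "\<And>x. lo \<le> v x \<and> v x \<le> hi"
  shows "lo \<le> (\<Sum>x\<in>UNIV. p x * v x) \<and> (\<Sum>x\<in>UNIV. p x * v x) \<le> hi"
proof -
  have "(\<Sum>x\<in>UNIV. p x * lo) \<le> (\<Sum>x\<in>UNIV. p x * v x)"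
       "(\<Sum>x\<in>UNIV. p x * v x) \<le> (\<Sum>x\<in>UNIV. p x * hi)"
    using assms by (auto intro!: sum_mono mult_left_mono)
  then show ?thesis
    using assms(2) by (simp add: sum_distrib_right[symmetric])
qed

lemma Vaux_bounds:
  fixes g :: "nat \<Rightarrow> 's::finite \<Rightarrow> 'a::finite \<Rightarrow> real"
  assumes "\<And>h' s a. h' \<in> {h..<h+m} \<Longrightarrow> 0 \<le> g h' s a \<and> g h' s a \<le> 1"
    and "\<And>h' s a s'. h' \<in> {h..<h+m} \<Longrightarrow> 0 \<le> P h' s a s'"
    and "\<And>h' s a. h' \<in> {h..<h+m} \<Longrightarrow> (\<Sum>s'\<in>UNIV. P h' s a s') = 1"
  shows "0 \<le> Vaux m \<pi> g P h s \<and> Vaux m \<pi> g P h s \<le> real m"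
  using assms
proof (induction m arbitrary: h s)
  case 0
  then show ?case by simp
next
  case (Suc m)
  have "0 \<le> Vaux m \<pi> g P (Suc h) s' \<and> Vaux m \<pi> g P (Suc h) s' \<le> real m" for s'
    using Suc.prems by (intro Suc.IH) auto
  then have "0 \<le> (\<Sum>s'\<in>UNIV. P h s a s' * Vaux m \<pi> g P (Suc h) s')
      \<and> (\<Sum>s'\<in>UNIV. P h s a s' * Vaux m \<pi> g P (Suc h) s') \<le> real m" for a
    using Suc.prems by (intro weighted_sum_bounds) auto
  moreover have "0 \<le> g h s a \<and> g h s a \<le> 1" for a
    using Suc.prems(1) by simp
  ultimately have "0 \<le> Vaux (Suc m) \<pi> g P h s \<and> Vaux (Suc m) \<pi> g P h s \<le> 1 + real m"
    unfolding Vaux.simps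
    by (intro weighted_sum_bounds) (auto simp: sum_pmf_eq_1 add_mono)
  then show ?case by simp
qed

text \<open>Simulation lemma: as values are at most \<open>m \<le> C\<close>, the bonus \<open>g - r\<close> pays for the
  transition mass that \<open>Q\<close> misses.\<close>
lemma Vaux_le_optimistic:
  fixes r g :: "nat \<Rightarrow> 's::finite \<Rightarrow> 'a::finite \<Rightarrow> real"
  assumes r: "\<And>h' s a. h' \<in> {h..<h+m} \<Longrightarrow> 0 \<le> r h' s a \<and> r h' s a \<le> 1"
    and P: "\<And>h' s a s'. h' \<in> {h..<h+m} \<Longrightarrow> 0 \<le> P h' s a s'"
      "\<And>h' s a. h' \<in> {h..<h+m} \<Longrightarrow> (\<Sum>s'\<in>UNIV. P h' s a s') = 1"
    and Q: "\<And>h' s a s'. h' \<in> {h..<h+m} \<Longrightarrow> 0 \<le> Q h' s a s'"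
    and bonus: "\<And>h' s a. h' \<in> {h..<h+m} \<Longrightarrow>
      C * (\<Sum>s'\<in>UNIV. max 0 (P h' s a s' - Q h' s a s')) \<le> g h' s a - r h' s a"
    and "real m \<le> C"
  shows "Vaux m \<pi> r P h s \<le> Vaux m \<pi> g Q h s"
  using assms
proof (induction m arbitrary: h s)
  case 0
  then show ?case by simp
next
  case (Suc m)
  define V where "V s' = Vaux m \<pi> r P (Suc h) s'" for s'
  have IH: "V s' \<le> Vaux m \<pi> g Q (Suc h) s'" for s'
    unfolding V_def using Suc.prems by (intro Suc.IH) auto
  have V: "0 \<le> V s' \<and> V s' \<le> C" for s'
    using Vaux_bounds[of "Suc h" m r P \<pi> s'] Suc.prems by (auto simp: V_def)
  have step: "r h s a + (\<Sum>s'\<in>UNIV. P h s a s' * V s')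
      \<le> g h s a + (\<Sum>s'\<in>UNIV. Q h s a s' * Vaux m \<pi> g Q (Suc h) s')" for a
  proof -
    have "(\<Sum>s'\<in>UNIV. P h s a s' * V s') - (\<Sum>s'\<in>UNIV. Q h s a s' * V s')
        = (\<Sum>s'\<in>UNIV. (P h s a s' - Q h s a s') * V s')"
      by (simp add: sum_subtractf[symmetric] algebra_simps)
    also have "\<dots> \<le> (\<Sum>s'\<in>UNIV. max 0 (P h s a s' - Q h s a s') * C)"
    proof (intro sum_mono)
      fix s'
      show "(P h s a s' - Q h s a s') * V s' \<le> max 0 (P h s a s' - Q h s a s') * C"
        using V[of s'] by (cases "Q h s a s' \<le> P h s a s'")
          (auto simp: max_def intro: mult_left_mono mult_nonpos_nonneg)
    qed
    also have "\<dots> \<le> g h s a - r h s a"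
      using Suc.prems(5)[of h s a] by (simp add: sum_distrib_left mult.commute)
    finally have "(\<Sum>s'\<in>UNIV. P h s a s' * V s') - (\<Sum>s'\<in>UNIV. Q h s a s' * V s')
        \<le> g h s a - r h s a" .
    moreover have "(\<Sum>s'\<in>UNIV. Q h s a s' * V s') \<le> (\<Sum>s'\<in>UNIV. Q h s a s' * Vaux m \<pi> g Q (Suc h) s')"
      using IH Suc.prems(4) by (intro sum_mono mult_left_mono) auto
    ultimately show ?thesis by linarith
  qed
  show ?case
    unfolding Vaux.simps V_def[symmetric] by (intro sum_mono mult_left_mono step) simp
qed

lemma V1_le_optimistic:
  fixes r g :: "nat \<Rightarrow> 's::finite \<Rightarrow> 'a::finite \<Rightarrow> real" and P :: "nat \<Rightarrow> 's \<Rightarrow> 'a \<Rightarrow> 's pmf"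
  assumes r: "\<And>h s a. h \<in> {1..H} \<Longrightarrow> 0 \<le> r h s a \<and> r h s a \<le> 1"
    and Q: "\<And>h s a s'. 0 \<le> Q h s a s'"
    and bonus: "\<And>h s a. h \<in> {1..H} \<Longrightarrow>
      real H * (\<Sum>s'\<in>UNIV. max 0 (kern P h s a s' - Q h s a s')) \<le> g h s a - r h s a"
  shows "V1 H \<pi> r (kern P) \<mu> \<le> min (real H) (V1 H \<pi> g Q \<mu>)"
proof -
  have steps: "{1..<1+H} = {1..H}" by auto
  have P: "0 \<le> kern P h s a s'" "(\<Sum>s'\<in>UNIV. kern P h s a s') = 1" for h s a s'
    by (simp_all add: kern_def sum_pmf_eq_1)
  have "0 \<le> Vaux H \<pi> r (kern P) 1 s \<and> Vaux H \<pi> r (kern P) 1 s \<le> real H" for s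
    using r P by (intro Vaux_bounds) (auto simp: steps)
  then have "V1 H \<pi> r (kern P) \<mu> \<le> real H"
    unfolding V1_def Vh_def
    using weighted_sum_bounds[of "pmf \<mu>" 0 "\<lambda>s. Vaux H \<pi> r (kern P) 1 s" "real H"]
    by (simp add: sum_pmf_eq_1)
  moreover have "Vaux H \<pi> r (kern P) 1 s \<le> Vaux H \<pi> g Q 1 s" for s
    using r P Q bonus by (intro Vaux_le_optimistic[where C = "real H"]) (auto simp: steps)
  then have "V1 H \<pi> r (kern P) \<mu> \<le> V1 H \<pi> g Q \<mu>"
    unfolding V1_def Vh_def by (intro sum_mono mult_left_mono) auto
  ultimately show ?thesis by simp
qed

section \<open>Empirical estimates on concentrated data\<close>

definition visits :: "(nat \<Rightarrow> nat \<Rightarrow> 's) \<Rightarrow> (nat \<Rightarrow> nat \<Rightarrow> 'a) \<Rightarrow> nat \<Rightarrow> nat \<Rightarrow> 's \<Rightarrow> 'a \<Rightarrow> nat set" where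
  "visits Sd Ad k h s a = {j \<in> {1..<k}. Sd j h = s \<and> Ad j h = a}"

lemma finite_visits [simp]: "finite (visits Sd Ad k h s a)"
  by (simp add: visits_def)

lemma Ncnt_eq_card_visits: "Ncnt Sd Ad k h s a = card (visits Sd Ad k h s a)"
  by (simp add: Ncnt_def visits_def)

lemma Phat_eq_ghat:
  "Phat Sd Ad k h s a s' = ghat (\<lambda>j i. if Sd j (Suc i) = s' then 1 else 0) Sd Ad k h s a"
proof -
  have "{j \<in> {1..<k}. Sd j h = s \<and> Ad j h = a \<and> Sd j (Suc h) = s'}
      = {j \<in> visits Sd Ad k h s a. Sd j (Suc h) = s'}"
    by (auto simp: visits_def)
  then have "real (card {j \<in> {1..<k}. Sd j h = s \<and> Ad j h = a \<and> Sd j (Suc h) = s'})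
      = (\<Sum>j\<in>visits Sd Ad k h s a. if Sd j (Suc h) = s' then 1 else 0)"
    by (simp add: sum.inter_filter[symmetric])
  then show ?thesis
    by (simp add: Phat_def ghat_def visits_def)
qed

definition lower_concentrated :: "real \<Rightarrow> (nat \<Rightarrow> nat \<Rightarrow> real) \<Rightarrow> (nat \<Rightarrow> nat \<Rightarrow> 's) \<Rightarrow> (nat \<Rightarrow> nat \<Rightarrow> 'a)
    \<Rightarrow> nat \<Rightarrow> nat \<Rightarrow> 's \<Rightarrow> 'a \<Rightarrow> real \<Rightarrow> bool" where
  "lower_concentrated Z Gd Sd Ad k h s a m \<longleftrightarrow>
     - sqrt (real (Ncnt Sd Ad k h s a) * Z) \<le> (\<Sum>j\<in>visits Sd Ad k h s a. Gd j h - m)"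

lemma ghat_ge_minus_beta:
  fixes Sd :: "nat \<Rightarrow> nat \<Rightarrow> 's::finite" and Ad :: "nat \<Rightarrow> nat \<Rightarrow> 'a::finite"
  assumes Z: "Z = ln (16 * real CARD('s)^2 * real CARD('a) * real H * real K / \<delta>)" "1 \<le> Z"
    and "m \<le> 1"
    and conc: "lower_concentrated Z Gd Sd Ad k h s a m"
  shows "m - beta H K \<delta> Sd Ad k h s a \<le> ghat Gd Sd Ad k h s a"
proof -
  define V where "V = visits Sd Ad k h s a"
  define n where "n = real (card V)"
  have beta: "beta H K \<delta> Sd Ad k h s a = sqrt (Z / max 1 n)"
    by (simp add: beta_def Z(1) Ncnt_eq_card_visits V_def n_def of_nat_max)
  have ghat: "ghat Gd Sd Ad k h s a = (\<Sum>j\<in>V. Gd j h) / max 1 n"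
    by (simp add: ghat_def Ncnt_eq_card_visits V_def n_def visits_def of_nat_max)
  show ?thesis
  proof (cases "V = {}")
    case True
    have "m \<le> sqrt Z"
      using Z(2) \<open>m \<le> 1\<close> real_sqrt_ge_one[of Z] by linarith
    then show ?thesis
      by (simp add: beta ghat n_def True)
  next
    case False
    then have n: "1 \<le> n"
      by (simp add: n_def V_def Suc_le_eq card_gt_0_iff)
    have "- sqrt (n * Z) \<le> (\<Sum>j\<in>V. Gd j h) - n * m"
      using conc by (simp add: lower_concentrated_def Ncnt_eq_card_visits sum_subtractf V_def n_def)
    moreover have "sqrt (n * Z) = n * sqrt (Z / n)"
      using n Z by (simp add: real_sqrt_mult real_sqrt_divide field_simps)
    ultimately have "n * (m - sqrt (Z / n)) \<le> (\<Sum>j\<in>V. Gd j h)"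
      by (simp add: algebra_simps)
    then show ?thesis
      using n by (simp add: beta ghat field_simps)
  qed
qed

lemma rtilde_bonus_covers_Phat:
  fixes Sd :: "nat \<Rightarrow> nat \<Rightarrow> 's::finite" and Ad :: "nat \<Rightarrow> nat \<Rightarrow> 'a::finite"
  assumes "0 \<le> beta H K \<delta> Sd Ad k h s a"
    and P: "\<And>s'. kern P h s a s' - beta H K \<delta> Sd Ad k h s a \<le> Phat Sd Ad k h s a s'"
    and r: "r h s a - beta H K \<delta> Sd Ad k h s a \<le> ghat Rd Sd Ad k h s a"
  shows "real H * (\<Sum>s'\<in>UNIV. max 0 (kern P h s a s' - Phat Sd Ad k h s a s'))
     \<le> rtilde H K \<delta> Sd Ad Rd k h s a - r h s a"
proof -
  define \<beta> where "\<beta> = beta H K \<delta> Sd Ad k h s a"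
  have "max 0 (kern P h s a s' - Phat Sd Ad k h s a s') \<le> \<beta>" for s'
    using assms(1) P[of s'] by (simp add: \<beta>_def)
  then have "(\<Sum>s'\<in>UNIV. max 0 (kern P h s a s' - Phat Sd Ad k h s a s')) \<le> real CARD('s) * \<beta>"
    using sum_mono[of UNIV "\<lambda>s'. max 0 (kern P h s a s' - Phat Sd Ad k h s a s')" "\<lambda>_. \<beta>"] by simp
  then have "real H * (\<Sum>s'\<in>UNIV. max 0 (kern P h s a s' - Phat Sd Ad k h s a s'))
      \<le> real H * (real CARD('s) * \<beta>)"
    by (simp add: mult_left_mono)
  then show ?thesis
    using r by (simp add: rtilde_def \<beta>_def algebra_simps)
qed

lemma V1_le_Vr_hat:
  fixes Sd :: "nat \<Rightarrow> nat \<Rightarrow> 's::finite" and Ad :: "nat \<Rightarrow> nat \<Rightarrow> 'a::finite"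
    and P :: "nat \<Rightarrow> 's \<Rightarrow> 'a \<Rightarrow> 's pmf"
  assumes Z: "Z = ln (16 * real CARD('s)^2 * real CARD('a) * real H * real K / \<delta>)" "1 \<le> Z"
    and r: "\<forall>h\<in>{1..H}. \<forall>s a. 0 \<le> r h s a \<and> r h s a \<le> 1"
    and conc_r: "\<And>h s a. h \<in> {1..H} \<Longrightarrow> lower_concentrated Z Rd Sd Ad k h s a (r h s a)"
    and conc_P: "\<And>h s a s'. h \<in> {1..H} \<Longrightarrow>
      lower_concentrated Z (\<lambda>j i. if Sd j (Suc i) = s' then 1 else 0) Sd Ad k h s a (kern P h s a s')"
  shows "V1 H \<pi> r (kern P) \<mu> \<le> Vr_hat H K \<delta> Sd Ad Rd \<mu> k \<pi>"
  unfolding Vr_hat_def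
proof (rule V1_le_optimistic)
  fix h s a assume h: "h \<in> {1..H}"
  have "r h s a - beta H K \<delta> Sd Ad k h s a \<le> ghat Rd Sd Ad k h s a"
    using Z r h conc_r by (intro ghat_ge_minus_beta) auto
  moreover have "kern P h s a s' - beta H K \<delta> Sd Ad k h s a \<le> Phat Sd Ad k h s a s'" for s'
    unfolding Phat_eq_ghat using Z h conc_P by (intro ghat_ge_minus_beta) (auto simp: kern_def pmf_le_1)
  moreover have "0 \<le> beta H K \<delta> Sd Ad k h s a"
    using Z by (simp add: beta_def)
  ultimately show "real H * (\<Sum>s'\<in>UNIV. max 0 (kern P h s a s' - Phat Sd Ad k h s a s'))
      \<le> rtilde H K \<delta> Sd Ad Rd k h s a - r h s a"
    by (intro rtilde_bonus_covers_Phat)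
qed (use r in \<open>auto simp: Phat_def\<close>)

section \<open>Conditionally sub-Gaussian increments\<close>

lemma bernoulli_mgf_le:
  fixes l p :: real
  assumes "0 \<le> p" "p \<le> 1"
  shows "p * exp (l * (1 - p)) + (1 - p) * exp (- l * p) \<le> exp (l\<^sup>2 / 8)"
proof -
  have nonneg: "p * exp (l * (1 - p)) + (1 - p) * exp (- l * p) \<le> exp (l\<^sup>2 / 8)"
    if "0 \<le> l" "0 \<le> p" "p \<le> 1" for l p :: real
  proof -
    have "0 < 1 + p * (exp l - 1)"
      using that by (intro add_pos_nonneg mult_nonneg_nonneg) auto
    then have "exp (-l * p + ln (1 + p * (exp l - 1))) = exp (-l * p) * (1 + p * (exp l - 1))"
      by (simp only: exp_add exp_ln)
    also have "\<dots> = p * exp (l * (1 - p)) + (1 - p) * exp (- l * p)"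
      by (simp add: algebra_simps exp_add[symmetric] exp_diff)
    finally have "exp (-l * p + ln (1 + p * (exp l - 1))) = p * exp (l * (1 - p)) + (1 - p) * exp (- l * p)" .
    moreover have "-l * p + ln (1 + p * (exp l - 1)) \<le> l\<^sup>2 / 8"
      using Hoeffdings_lemma_aux[of l p] that by simp
    ultimately show ?thesis
      by (metis exp_le_cancel_iff)
  qed
  show ?thesis
  proof (cases "0 \<le> l")
    case True
    then show ?thesis using nonneg assms by blast
  next
    case False
    then show ?thesis
      using nonneg[of "-l" "1 - p"] assms by (simp add: algebra_simps)
  qed
qed

text \<open>The integrated form of \<open>E[exp (l X) | F] \<le> exp (l\<^sup>2 / 4)\<close> for every real \<open>l\<close>,
  which needs no integrability of \<open>exp (l X)\<close>.\<close>
definition cond_subgaussian :: "'x measure \<Rightarrow> 'x measure \<Rightarrow> ('x \<Rightarrow> real) \<Rightarrow> bool" where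
  "cond_subgaussian M F X \<longleftrightarrow> (\<forall>f \<in> borel_measurable F. \<forall>l.
     (\<integral>\<^sup>+\<omega>. f \<omega> * ennreal (exp (l * X \<omega>)) \<partial>M) \<le> (\<integral>\<^sup>+\<omega>. f \<omega> * ennreal (exp (l\<^sup>2 / 4)) \<partial>M))"

lemma (in prob_space) sigma_finite_subalgebra_of_subalgebra:
  "subalgebra M F \<Longrightarrow> sigma_finite_subalgebra M F"
  by (intro finite_measure_subalgebra_is_sigma_finite finite_measure_subalgebra.intro
      finite_measure_subalgebra_axioms.intro finite_measure_axioms)

context sigma_finite_subalgebra
begin

lemma cond_subgaussianI:
  assumes [measurable]: "X \<in> borel_measurable M"
    and mgf: "\<And>l. AE \<omega> in M. nn_cond_exp M F (\<lambda>\<omega>. ennreal (exp (l * X \<omega>))) \<omega> \<le> ennreal (exp (l\<^sup>2 / 4))"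
  shows "cond_subgaussian M F X"
  unfolding cond_subgaussian_def
proof (intro ballI allI)
  fix f :: "'a \<Rightarrow> ennreal" and l :: real
  assume [measurable]: "f \<in> borel_measurable F"
  have "(\<integral>\<^sup>+\<omega>. f \<omega> * ennreal (exp (l * X \<omega>)) \<partial>M)
      = (\<integral>\<^sup>+\<omega>. f \<omega> * nn_cond_exp M F (\<lambda>\<omega>. ennreal (exp (l * X \<omega>))) \<omega> \<partial>M)"
    by (rule nn_cond_exp_intg[symmetric]) measurable
  also have "\<dots> \<le> (\<integral>\<^sup>+\<omega>. f \<omega> * ennreal (exp (l\<^sup>2 / 4)) \<partial>M)"
    using mgf[of l] by (intro nn_integral_mono_AE) (auto elim!: eventually_mono intro: mult_left_mono)
  finally show "(\<integral>\<^sup>+\<omega>. f \<omega> * ennreal (exp (l * X \<omega>)) \<partial>M) \<le> (\<integral>\<^sup>+\<omega>. f \<omega> * ennreal (exp (l\<^sup>2 / 4)) \<partial>M)" .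
qed

lemma AE_nn_cond_exp_eq_real_cond_exp:
  assumes "integrable M Y" "\<And>\<omega>. 0 \<le> Y \<omega>"
  shows "AE \<omega> in M. nn_cond_exp M F (\<lambda>\<omega>. ennreal (Y \<omega>)) \<omega> = ennreal (real_cond_exp M F Y \<omega>)"
proof -
  have [measurable]: "Y \<in> borel_measurable M"
    using assms(1) by blast
  have "AE \<omega> in M. nn_cond_exp M F (\<lambda>\<omega>. ennreal (- Y \<omega>)) \<omega> = 0"
  proof -
    have "AE \<omega> in M. (\<lambda>_. 0::ennreal) \<omega> = nn_cond_exp M F (\<lambda>_. 0) \<omega>"
      by (rule nn_cond_exp_F_meas) simp
    moreover have "(\<lambda>\<omega>. ennreal (- Y \<omega>)) = (\<lambda>_. 0)"
      using assms(2) by (simp add: ennreal_neg)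
    ultimately show ?thesis by auto
  qed
  moreover have "AE \<omega> in M. nn_cond_exp M F (\<lambda>\<omega>. ennreal (Y \<omega>)) \<omega> \<noteq> \<infinity>"
  proof (rule nn_integral_PInf_AE)
    have "(\<integral>\<^sup>+\<omega>. 1 * nn_cond_exp M F (\<lambda>\<omega>. ennreal (Y \<omega>)) \<omega> \<partial>M) = (\<integral>\<^sup>+\<omega>. 1 * ennreal (Y \<omega>) \<partial>M)"
      by (intro nn_cond_exp_intg) auto
    then show "(\<integral>\<^sup>+\<omega>. nn_cond_exp M F (\<lambda>\<omega>. ennreal (Y \<omega>)) \<omega> \<partial>M) \<noteq> \<infinity>"
      using assms by (simp add: nn_integral_eq_integral)
  qed auto
  ultimately show ?thesis
    by eventually_elim (simp add: real_cond_exp_def ennreal_enn2real_if)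
qed

lemma nn_integral_mult_real_cond_exp:
  assumes "integrable M Y" "\<And>\<omega>. 0 \<le> Y \<omega>" and [measurable]: "a \<in> borel_measurable F"
  shows "(\<integral>\<^sup>+\<omega>. a \<omega> * ennreal (Y \<omega>) \<partial>M) = (\<integral>\<^sup>+\<omega>. a \<omega> * ennreal (real_cond_exp M F Y \<omega>) \<partial>M)"
proof -
  have [measurable]: "Y \<in> borel_measurable M"
    using assms(1) by blast
  have "(\<integral>\<^sup>+\<omega>. a \<omega> * ennreal (Y \<omega>) \<partial>M) = (\<integral>\<^sup>+\<omega>. a \<omega> * nn_cond_exp M F (\<lambda>\<omega>. ennreal (Y \<omega>)) \<omega> \<partial>M)"
    by (rule nn_cond_exp_intg[symmetric]) measurable
  also have "\<dots> = (\<integral>\<^sup>+\<omega>. a \<omega> * ennreal (real_cond_exp M F Y \<omega>) \<partial>M)"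
    using AE_nn_cond_exp_eq_real_cond_exp[OF assms(1,2)] by (intro nn_integral_cong_AE) auto
  finally show ?thesis .
qed

end

lemma (in prob_space) nn_integral_if_cond_prob:
  assumes F: "subalgebra M F" and [measurable]: "Measurable.pred M Q"
    and [measurable]: "a \<in> borel_measurable F" "b \<in> borel_measurable F" "p \<in> borel_measurable F"
    and cond_prob: "AE \<omega> in M. real_cond_exp M F (indicator {\<omega>\<in>space M. Q \<omega>}) \<omega> = p \<omega>"
  shows "(\<integral>\<^sup>+\<omega>. (if Q \<omega> then a \<omega> else b \<omega>) \<partial>M) = (\<integral>\<^sup>+\<omega>. a \<omega> * ennreal (p \<omega>) + b \<omega> * ennreal (1 - p \<omega>) \<partial>M)"
proof -
  interpret sigma_finite_subalgebra M F
    using F by (rule sigma_finite_subalgebra_of_subalgebra)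
  define Y :: "'a \<Rightarrow> real" where "Y = indicator {\<omega>\<in>space M. Q \<omega>}"
  have "{\<omega>\<in>space M. Q \<omega>} \<in> sets M"
    by measurable
  then have "integrable M Y"
    by (simp add: Y_def integrable_indicator_iff emeasure_eq_measure)
  then have Y: "integrable M Y" "integrable M (\<lambda>\<omega>. 1 - Y \<omega>)" "0 \<le> Y \<omega>" "0 \<le> 1 - Y \<omega>" for \<omega>
    by (auto simp: Y_def split: split_indicator)
  have "AE \<omega> in M. real_cond_exp M F (\<lambda>\<omega>. 1 - Y \<omega>) \<omega> = real_cond_exp M F (\<lambda>_. 1) \<omega> - real_cond_exp M F Y \<omega>"
    using Y by (intro real_cond_exp_diff) auto
  moreover have "AE \<omega> in M. real_cond_exp M F (\<lambda>_. 1) \<omega> = 1"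
    by (rule real_cond_exp_F_meas) auto
  ultimately have cond_prob': "AE \<omega> in M. real_cond_exp M F (\<lambda>\<omega>. 1 - Y \<omega>) \<omega> = 1 - p \<omega>"
    using cond_prob unfolding Y_def[symmetric] by eventually_elim simp
  have [measurable]: "a \<in> borel_measurable M" "b \<in> borel_measurable M" "p \<in> borel_measurable M"
      "Y \<in> borel_measurable M"
    using Y(1) by (auto intro: measurable_from_subalg[OF subalg])
  have "(\<integral>\<^sup>+\<omega>. (if Q \<omega> then a \<omega> else b \<omega>) \<partial>M)
      = (\<integral>\<^sup>+\<omega>. a \<omega> * ennreal (Y \<omega>) \<partial>M) + (\<integral>\<^sup>+\<omega>. b \<omega> * ennreal (1 - Y \<omega>) \<partial>M)"
    by (subst nn_integral_add[symmetric]) (auto intro!: nn_integral_cong simp: Y_def)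
  also have "(\<integral>\<^sup>+\<omega>. a \<omega> * ennreal (Y \<omega>) \<partial>M) = (\<integral>\<^sup>+\<omega>. a \<omega> * ennreal (real_cond_exp M F Y \<omega>) \<partial>M)"
    using Y by (intro nn_integral_mult_real_cond_exp) auto
  also have "\<dots> = (\<integral>\<^sup>+\<omega>. a \<omega> * ennreal (p \<omega>) \<partial>M)"
    using cond_prob unfolding Y_def[symmetric] by (intro nn_integral_cong_AE) auto
  also have "(\<integral>\<^sup>+\<omega>. b \<omega> * ennreal (1 - Y \<omega>) \<partial>M)
      = (\<integral>\<^sup>+\<omega>. b \<omega> * ennreal (real_cond_exp M F (\<lambda>\<omega>. 1 - Y \<omega>) \<omega>) \<partial>M)"
    using Y by (intro nn_integral_mult_real_cond_exp) auto
  also have "\<dots> = (\<integral>\<^sup>+\<omega>. b \<omega> * ennreal (1 - p \<omega>) \<partial>M)"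
    using cond_prob' by (intro nn_integral_cong_AE) auto
  also have "(\<integral>\<^sup>+\<omega>. a \<omega> * ennreal (p \<omega>) \<partial>M) + \<dots>
      = (\<integral>\<^sup>+\<omega>. a \<omega> * ennreal (p \<omega>) + b \<omega> * ennreal (1 - p \<omega>) \<partial>M)"
    by (intro nn_integral_add[symmetric]) measurable
  finally show ?thesis .
qed

text \<open>Conditional form of Hoeffding's lemma.\<close>
lemma (in prob_space) cond_subgaussian_centered_indicator:
  assumes F: "subalgebra M F" and [measurable]: "Measurable.pred M Q"
    and [measurable]: "p \<in> borel_measurable F" and p: "\<And>\<omega>. 0 \<le> p \<omega> \<and> p \<omega> \<le> 1"
    and cond_prob: "AE \<omega> in M. real_cond_exp M F (indicator {\<omega>\<in>space M. Q \<omega>}) \<omega> = p \<omega>"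
  shows "cond_subgaussian M F (\<lambda>\<omega>. (if Q \<omega> then 1 else 0) - p \<omega>)"
  unfolding cond_subgaussian_def
proof (intro ballI allI)
  fix f :: "'a \<Rightarrow> ennreal" and l :: real
  assume [measurable]: "f \<in> borel_measurable F"
  define a where "a \<omega> = f \<omega> * ennreal (exp (l * (1 - p \<omega>)))" for \<omega>
  define b where "b \<omega> = f \<omega> * ennreal (exp (- l * p \<omega>))" for \<omega>
  have [measurable]: "a \<in> borel_measurable F" "b \<in> borel_measurable F"
    unfolding a_def b_def by measurable
  have "(\<integral>\<^sup>+\<omega>. f \<omega> * ennreal (exp (l * ((if Q \<omega> then 1 else 0) - p \<omega>))) \<partial>M)
      = (\<integral>\<^sup>+\<omega>. (if Q \<omega> then a \<omega> else b \<omega>) \<partial>M)"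
    by (intro nn_integral_cong) (simp add: a_def b_def)
  also have "\<dots> = (\<integral>\<^sup>+\<omega>. a \<omega> * ennreal (p \<omega>) + b \<omega> * ennreal (1 - p \<omega>) \<partial>M)"
    using F cond_prob by (intro nn_integral_if_cond_prob) auto
  also have "\<dots> \<le> (\<integral>\<^sup>+\<omega>. f \<omega> * ennreal (exp (l\<^sup>2 / 4)) \<partial>M)"
  proof (intro nn_integral_mono)
    fix \<omega>
    have "p \<omega> * exp (l * (1 - p \<omega>)) + (1 - p \<omega>) * exp (- l * p \<omega>) \<le> exp (l\<^sup>2 / 8)"
      using p by (intro bernoulli_mgf_le) auto
    also have "\<dots> \<le> exp (l\<^sup>2 / 4)"
      by simp
    finally have "f \<omega> * ennreal (p \<omega> * exp (l * (1 - p \<omega>)) + (1 - p \<omega>) * exp (- l * p \<omega>))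
        \<le> f \<omega> * ennreal (exp (l\<^sup>2 / 4))"
      by (intro mult_left_mono ennreal_leI) auto
    then show "a \<omega> * ennreal (p \<omega>) + b \<omega> * ennreal (1 - p \<omega>) \<le> f \<omega> * ennreal (exp (l\<^sup>2 / 4))"
      using p[of \<omega>] by (simp add: a_def b_def ennreal_mult ennreal_plus[symmetric] distrib_left ac_simps)
  qed
  finally show "(\<integral>\<^sup>+\<omega>. f \<omega> * ennreal (exp (l * ((if Q \<omega> then 1 else 0) - p \<omega>))) \<partial>M)
      \<le> (\<integral>\<^sup>+\<omega>. f \<omega> * ennreal (exp (l\<^sup>2 / 4)) \<partial>M)" .
qed

section \<open>Deviation of the sum over the first visits\<close>

text \<open>\<open>I j\<close> marks the episodes \<open>j\<close> that visit a fixed step-state-action triple, \<open>X j\<close>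
  is the noise observed in such a visit, and \<open>G j\<close> is the information available just
  before \<open>X j\<close> is revealed.\<close>
locale visit_filtration = prob_space M for M :: "'x measure" +
  fixes K :: nat and G :: "nat \<Rightarrow> 'x measure" and I :: "nat \<Rightarrow> 'x \<Rightarrow> bool" and X :: "nat \<Rightarrow> 'x \<Rightarrow> real"
  assumes subalgebra_G: "\<And>j. j \<in> {1..<K} \<Longrightarrow> subalgebra M (G j)"
    and visit_measurable_G: "\<And>j i. j \<in> {1..<K} \<Longrightarrow> i \<in> {1..j} \<Longrightarrow> Measurable.pred (G j) (I i)"
    and increment_measurable_G: "\<And>j i. j \<in> {1..<K} \<Longrightarrow> i \<in> {1..<j} \<Longrightarrow> X i \<in> borel_measurable (G j)"
    and increment_subgaussian: "\<And>j. j \<in> {1..<K} \<Longrightarrow> cond_subgaussian M (G j) (X j)"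
    and visit_measurable [measurable]: "\<And>j. Measurable.pred M (I j)"
    and increment_measurable [measurable]: "\<And>j. X j \<in> borel_measurable M"
begin

definition first_visit :: "nat \<Rightarrow> nat \<Rightarrow> 'x \<Rightarrow> bool" where
  "first_visit n j \<omega> \<longleftrightarrow> I j \<omega> \<and> card {i \<in> {1..<j}. I i \<omega>} < n"

text \<open>Exponential supermartingale of the increments at the first \<open>n\<close> visits; stopping
  after \<open>n\<close> visits makes the count at which the deviation is measured deterministic.\<close>
definition exp_process :: "nat \<Rightarrow> real \<Rightarrow> nat \<Rightarrow> 'x \<Rightarrow> real" where
  "exp_process n l k \<omega> = exp (\<Sum>j\<in>{1..<k}. if first_visit n j \<omega> then l * X j \<omega> - l\<^sup>2 / 4 else 0)"

lemma measurable_first_visit: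
  assumes "1 \<le> j" "\<And>i. i \<in> {1..j} \<Longrightarrow> Measurable.pred N (I i)"
  shows "Measurable.pred N (first_visit n j)"
proof -
  have eq: "first_visit n j = (\<lambda>\<omega>. I j \<omega> \<and> (\<Sum>i\<in>{1..<j}. if I i \<omega> then 1 else 0::real) < real n)"
    by (simp add: fun_eq_iff first_visit_def sum.inter_filter[symmetric])
  have [measurable]: "(\<lambda>\<omega>. \<Sum>i\<in>{1..<j}. if I i \<omega> then 1 else 0::real) \<in> borel_measurable N"
  proof (rule borel_measurable_sum)
    fix i assume "i \<in> {1..<j}"
    then have [measurable]: "Measurable.pred N (I i)"
      using assms(2) by auto
    show "(\<lambda>\<omega>. if I i \<omega> then 1 else 0::real) \<in> borel_measurable N"
      by measurable
  qed
  have [measurable]: "Measurable.pred N (I j)"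
    using assms by auto
  show ?thesis
    unfolding eq by measurable
qed

lemma measurable_exp_process:
  assumes "\<And>i. i \<in> {1..<k} \<Longrightarrow> Measurable.pred N (I i)" "\<And>i. i \<in> {1..<k} \<Longrightarrow> X i \<in> borel_measurable N"
  shows "exp_process n l k \<in> borel_measurable N"
proof -
  have "(\<lambda>\<omega>. \<Sum>j\<in>{1..<k}. if first_visit n j \<omega> then l * X j \<omega> - l\<^sup>2 / 4 else 0) \<in> borel_measurable N"
  proof (rule borel_measurable_sum)
    fix j assume j: "j \<in> {1..<k}"
    have [measurable]: "Measurable.pred N (first_visit n j)" "X j \<in> borel_measurable N"
      using j assms by (auto intro: measurable_first_visit)
    show "(\<lambda>\<omega>. if first_visit n j \<omega> then l * X j \<omega> - l\<^sup>2 / 4 else 0) \<in> borel_measurable N"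
      by measurable
  qed
  then show ?thesis
    unfolding exp_process_def by measurable
qed

lemma nn_integral_exp_process_Suc_le:
  assumes j: "j \<in> {1..<K}"
  shows "(\<integral>\<^sup>+\<omega>. exp_process n l (Suc j) \<omega> \<partial>M) \<le> (\<integral>\<^sup>+\<omega>. exp_process n l j \<omega> \<partial>M)"
proof -
  have [measurable]: "exp_process n l j \<in> borel_measurable (G j)" "Measurable.pred (G j) (first_visit n j)"
    using j visit_measurable_G increment_measurable_G
    by (auto intro!: measurable_exp_process measurable_first_visit)
  have [measurable]: "exp_process n l j \<in> borel_measurable M" "Measurable.pred M (first_visit n j)"
    using j by (auto intro!: measurable_exp_process measurable_first_visit)
  define f where "f \<omega> = ennreal (if first_visit n j \<omega> then exp_process n l j \<omega> * exp (- l\<^sup>2 / 4) else 0)" for \<omega>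
  define g where "g \<omega> = ennreal (if first_visit n j \<omega> then 0 else exp_process n l j \<omega>)" for \<omega>
  have [measurable]: "f \<in> borel_measurable (G j)" "f \<in> borel_measurable M" "g \<in> borel_measurable M"
    unfolding f_def g_def by measurable
  have Suc_step: "exp_process n l (Suc j) \<omega> =
      exp_process n l j \<omega> * (if first_visit n j \<omega> then exp (l * X j \<omega> - l\<^sup>2 / 4) else 1)" for \<omega>
    using j by (simp add: exp_process_def exp_add)
  then have Suc: "ennreal (exp_process n l (Suc j) \<omega>) = g \<omega> + f \<omega> * ennreal (exp (l * X j \<omega>))" for \<omega>
  proof (cases "first_visit n j \<omega>")
    case True
    have "exp (l * X j \<omega> - l\<^sup>2 / 4) = exp (- l\<^sup>2 / 4) * exp (l * X j \<omega>)"
      by (simp add: exp_add[symmetric])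
    then have "exp_process n l (Suc j) \<omega> = (exp_process n l j \<omega> * exp (- l\<^sup>2 / 4)) * exp (l * X j \<omega>)"
      using Suc_step True by simp
    then show ?thesis
      using True by (simp add: f_def g_def ennreal_mult''[symmetric])
  qed (simp add: f_def g_def)
  have "ennreal (exp_process n l j \<omega>) = g \<omega> + f \<omega> * ennreal (exp (l\<^sup>2 / 4))" for \<omega>
    by (simp add: f_def g_def exp_minus ennreal_mult''[symmetric] exp_process_def)
  then have "(\<integral>\<^sup>+\<omega>. exp_process n l j \<omega> \<partial>M) = (\<integral>\<^sup>+\<omega>. g \<omega> \<partial>M) + (\<integral>\<^sup>+\<omega>. f \<omega> * ennreal (exp (l\<^sup>2 / 4)) \<partial>M)"
    by (simp add: nn_integral_add)
  moreover have "(\<integral>\<^sup>+\<omega>. exp_process n l (Suc j) \<omega> \<partial>M)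
      = (\<integral>\<^sup>+\<omega>. g \<omega> \<partial>M) + (\<integral>\<^sup>+\<omega>. f \<omega> * ennreal (exp (l * X j \<omega>)) \<partial>M)"
    by (simp add: Suc nn_integral_add)
  moreover have "(\<integral>\<^sup>+\<omega>. f \<omega> * ennreal (exp (l * X j \<omega>)) \<partial>M) \<le> (\<integral>\<^sup>+\<omega>. f \<omega> * ennreal (exp (l\<^sup>2 / 4)) \<partial>M)"
    using increment_subgaussian[OF j] by (simp add: cond_subgaussian_def)
  ultimately show ?thesis
    by (simp add: add_left_mono)
qed

lemma nn_integral_exp_process_le_1:
  assumes "k \<le> K"
  shows "(\<integral>\<^sup>+\<omega>. exp_process n l k \<omega> \<partial>M) \<le> 1"
  using assms
proof (induction k)
  case 0
  then show ?case by (simp add: exp_process_def emeasure_space_1)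
next
  case (Suc j)
  show ?case
  proof (cases "j = 0")
    case True
    then show ?thesis by (simp add: exp_process_def emeasure_space_1)
  next
    case False
    then show ?thesis
      using Suc nn_integral_exp_process_Suc_le[of j n l] by simp
  qed
qed

lemma first_visits_eq_visits:
  assumes "card {j \<in> {1..<k}. I j \<omega>} = n" "k \<le> K"
  shows "{j \<in> {1..<K}. first_visit n j \<omega>} = {j \<in> {1..<k}. I j \<omega>}"
proof (intro equalityI subsetI)
  fix j assume j: "j \<in> {j \<in> {1..<K}. first_visit n j \<omega>}"
  have "j < k"
  proof (rule ccontr)
    assume "\<not> j < k"
    then have "card {i \<in> {1..<k}. I i \<omega>} \<le> card {i \<in> {1..<j}. I i \<omega>}"
      by (intro card_mono) auto
    then show False
      using j assms(1) by (simp add: first_visit_def)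
  qed
  then show "j \<in> {j \<in> {1..<k}. I j \<omega>}"
    using j by (simp add: first_visit_def)
next
  fix j assume j: "j \<in> {j \<in> {1..<k}. I j \<omega>}"
  then have "card {i \<in> {1..<j}. I i \<omega>} < card {i \<in> {1..<k}. I i \<omega>}"
    by (intro psubset_card_mono) auto
  then show "j \<in> {j \<in> {1..<K}. first_visit n j \<omega>}"
    using j assms by (simp add: first_visit_def)
qed

lemma measure_exp_process_ge_le:
  "measure M {\<omega>\<in>space M. exp Z \<le> exp_process n l K \<omega>} \<le> exp (- Z)"
proof -
  have [measurable]: "exp_process n l K \<in> borel_measurable M"
    by (intro measurable_exp_process) auto
  have "{\<omega>\<in>space M. exp Z \<le> exp_process n l K \<omega>}
      = {\<omega>\<in>space M. 1 \<le> ennreal (exp (- Z)) * ennreal (exp_process n l K \<omega>)}"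
  proof -
    have "exp Z \<le> w \<longleftrightarrow> ennreal 1 \<le> ennreal (exp (- Z) * w)" if "0 \<le> w" for w
      using that by (subst ennreal_le_iff) (auto simp: exp_minus field_simps)
    moreover have "0 \<le> exp_process n l K \<omega>" for \<omega>
      by (simp add: exp_process_def)
    ultimately show ?thesis
      by (auto simp: ennreal_mult)
  qed
  also have "emeasure M \<dots> \<le> ennreal (exp (- Z)) * (\<integral>\<^sup>+\<omega>. ennreal (exp_process n l K \<omega>) * indicator (space M) \<omega> \<partial>M)"
    by (intro nn_integral_Markov_inequality) auto
  also have "(\<integral>\<^sup>+\<omega>. ennreal (exp_process n l K \<omega>) * indicator (space M) \<omega> \<partial>M) = (\<integral>\<^sup>+\<omega>. exp_process n l K \<omega> \<partial>M)"
    by (intro nn_integral_cong) (simp add: indicator_def)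
  also have "ennreal (exp (- Z)) * \<dots> \<le> ennreal (exp (- Z)) * 1"
    by (intro mult_left_mono nn_integral_exp_process_le_1) auto
  finally show ?thesis
    by (simp add: measure_def enn2real_leI)
qed

lemma exp_process_ge_of_deviation:
  assumes "1 \<le> n" "0 < Z" "k \<le> K" "card {j \<in> {1..<k}. I j \<omega>} = n"
    and dev: "(\<Sum>j\<in>{j \<in> {1..<k}. I j \<omega>}. X j \<omega>) < - sqrt (real n * Z)"
  shows "exp Z \<le> exp_process n (-2 * sqrt (Z / real n)) K \<omega>"
proof -
  define l where "l = -2 * sqrt (Z / real n)"
  have "(\<Sum>j\<in>{1..<K}. if first_visit n j \<omega> then l * X j \<omega> - l\<^sup>2 / 4 else 0)
      = (\<Sum>j\<in>{j \<in> {1..<K}. first_visit n j \<omega>}. l * X j \<omega> - l\<^sup>2 / 4)"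
    by (rule sum.inter_filter[symmetric]) simp
  also have "\<dots> = l * (\<Sum>j\<in>{j \<in> {1..<k}. I j \<omega>}. X j \<omega>) - real n * (l\<^sup>2 / 4)"
    unfolding first_visits_eq_visits[OF assms(4,3)] using assms(4) by (simp add: sum_subtractf sum_distrib_left)
  also have "real n * (l\<^sup>2 / 4) = Z"
    using assms by (simp add: l_def power_mult_distrib)
  finally have "ln (exp_process n l K \<omega>) = l * (\<Sum>j\<in>{j \<in> {1..<k}. I j \<omega>}. X j \<omega>) - Z"
    by (simp add: exp_process_def)
  moreover have "l * (- sqrt (real n * Z)) < l * (\<Sum>j\<in>{j \<in> {1..<k}. I j \<omega>}. X j \<omega>)"
    using dev assms by (intro mult_strict_left_mono_neg) (auto simp: l_def)
  moreover have "l * (- sqrt (real n * Z)) = 2 * Z"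
    using assms by (simp add: l_def real_sqrt_mult real_sqrt_divide field_simps)
  ultimately have "Z \<le> ln (exp_process n l K \<omega>)"
    by linarith
  then show ?thesis
    by (simp add: l_def exp_process_def)
qed

lemma visit_sum_deviation_bound:
  assumes "1 \<le> n" "0 < Z"
  shows "\<exists>B\<in>sets M. {\<omega>\<in>space M. \<exists>k\<le>K. card {j \<in> {1..<k}. I j \<omega>} = n
      \<and> (\<Sum>j\<in>{j \<in> {1..<k}. I j \<omega>}. X j \<omega>) < - sqrt (real n * Z)} \<subseteq> B \<and> measure M B \<le> exp (- Z)"
proof
  let ?W = "exp_process n (-2 * sqrt (Z / real n)) K"
  have [measurable]: "?W \<in> borel_measurable M"
    by (intro measurable_exp_process) auto
  show "{\<omega>\<in>space M. exp Z \<le> ?W \<omega>} \<in> sets M"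
    by measurable
  show "{\<omega>\<in>space M. \<exists>k\<le>K. card {j \<in> {1..<k}. I j \<omega>} = n
      \<and> (\<Sum>j\<in>{j \<in> {1..<k}. I j \<omega>}. X j \<omega>) < - sqrt (real n * Z)} \<subseteq> {\<omega>\<in>space M. exp Z \<le> ?W \<omega>}
    \<and> measure M {\<omega>\<in>space M. exp Z \<le> ?W \<omega>} \<le> exp (- Z)"
    using assms exp_process_ge_of_deviation measure_exp_process_ge_le by blast
qed

end

lemma (in prob_space) union_bound_cover:
  assumes "finite T" "\<And>t. t \<in> T \<Longrightarrow> \<exists>B\<in>sets M. E t \<subseteq> B \<and> measure M B \<le> e"
  shows "\<exists>U\<in>sets M. (\<Union>t\<in>T. E t) \<subseteq> U \<and> measure M U \<le> real (card T) * e"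
proof -
  obtain B where B: "\<And>t. t \<in> T \<Longrightarrow> B t \<in> sets M \<and> E t \<subseteq> B t \<and> measure M (B t) \<le> e"
    using assms(2) by metis
  have "measure M (\<Union>t\<in>T. B t) \<le> (\<Sum>t\<in>T. measure M (B t))"
    using B assms(1) by (intro measure_UNION_le) auto
  also have "\<dots> \<le> real (card T) * e"
    using B by (intro sum_bounded_above) auto
  finally show ?thesis
    using B assms(1) by (intro bexI[of _ "\<Union>t\<in>T. B t"]) auto
qed

lemma (in prob_space) visit_sums_bounded_whp:
  assumes "finite T" "\<And>t. t \<in> T \<Longrightarrow> visit_filtration M K (G t) (I t) (X t)" "0 < Z"
  shows "\<exists>U\<in>sets M. measure M U \<le> real (card T * K) * exp (- Z) \<and>
    (\<forall>\<omega>\<in>space M - U. \<forall>t\<in>T. \<forall>k\<le>K.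
       - sqrt (real (card {j \<in> {1..<k}. I t j \<omega>}) * Z) \<le> (\<Sum>j\<in>{j \<in> {1..<k}. I t j \<omega>}. X t j \<omega>))"
proof -
  define E where "E = (\<lambda>(t, n). {\<omega>\<in>space M. \<exists>k\<le>K. card {j \<in> {1..<k}. I t j \<omega>} = n
      \<and> (\<Sum>j\<in>{j \<in> {1..<k}. I t j \<omega>}. X t j \<omega>) < - sqrt (real n * Z)})"
  have "\<exists>U\<in>sets M. (\<Union>i\<in>T \<times> {1..K}. E i) \<subseteq> U \<and> measure M U \<le> real (card (T \<times> {1..K})) * exp (- Z)"
  proof (rule union_bound_cover)
    fix i assume "i \<in> T \<times> {1..K}"
    then show "\<exists>B\<in>sets M. E i \<subseteq> B \<and> measure M B \<le> exp (- Z)"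
      using assms visit_filtration.visit_sum_deviation_bound by (force simp: E_def)
  qed (use assms in simp)
  then obtain U where U: "U \<in> sets M" "(\<Union>i\<in>T \<times> {1..K}. E i) \<subseteq> U"
    "measure M U \<le> real (card T * K) * exp (- Z)"
    by (auto simp: card_cartesian_product)
  have "- sqrt (real (card {j \<in> {1..<k}. I t j \<omega>}) * Z) \<le> (\<Sum>j\<in>{j \<in> {1..<k}. I t j \<omega>}. X t j \<omega>)"
    if "\<omega> \<in> space M - U" "t \<in> T" "k \<le> K" for \<omega> t k
  proof (cases "{j \<in> {1..<k}. I t j \<omega>} = {}")
    case False
    have "card {j \<in> {1..<k}. I t j \<omega>} \<le> card {1..<k}"
      by (intro card_mono) auto
    then have "(t, card {j \<in> {1..<k}. I t j \<omega>}) \<in> T \<times> {1..K}"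
      using False that by (auto simp: Suc_le_eq card_gt_0_iff)
    then show ?thesis
      using that U(2) by (force simp: E_def)
  next
    case True
    then show ?thesis
      by (simp only: card.empty sum.empty) simp
  qed
  then show ?thesis
    using U by blast
qed

section \<open>Observation histories\<close>

lemma borel_measurable_countable_comp2:
  fixes f :: "'x \<Rightarrow> 's::countable" and g :: "'x \<Rightarrow> 'a::countable"
  assumes "f \<in> N \<rightarrow>\<^sub>M count_space UNIV" "g \<in> N \<rightarrow>\<^sub>M count_space UNIV"
  shows "(\<lambda>\<omega>. q (f \<omega>) (g \<omega>) :: real) \<in> borel_measurable N"
proof -
  have "(\<lambda>\<omega>. q s (g \<omega>)) \<in> borel_measurable N" for s
    by (rule measurable_compose_countable[where f = "\<lambda>a \<omega>. q s a"]) (use assms in auto)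
  then show ?thesis
    by (rule measurable_compose_countable[where f = "\<lambda>s \<omega>. q s (g \<omega>)"]) (use assms in auto)
qed

lemma space_hist_sigma [simp]: "space (hist_sigma M H S A R C k p) = space M"
  by (simp add: hist_sigma_def space_measure_of_conv)

lemma sets_hist_sigma: "sets (hist_sigma M H S A R C k p) = sigma_sets (space M)
   (\<Union>{obs_gen M S A R C j i t | j i t. 1 \<le> j \<and> ovalid H i t \<and> (j < k \<or> (j = k \<and> opos i t < p))})"
proof -
  have "obs_gen M S A R C j i t \<subseteq> Pow (space M)" for j i t
    by (cases t) (auto simp: obs_gen_def)
  then show ?thesis
    unfolding hist_sigma_def by (intro sets_measure_of) blast
qed

lemma obs_gen_in_hist_sigma:
  assumes "B \<in> obs_gen M S A R C j i t" "1 \<le> j" "ovalid H i t" "j < k \<or> (j = k \<and> opos i t < p)"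
  shows "B \<in> sets (hist_sigma M H S A R C k p)"
  unfolding sets_hist_sigma using assms by (intro sigma_sets.Basic) blast

lemma measurable_S_hist_sigma:
  fixes S :: "nat \<Rightarrow> nat \<Rightarrow> 'x \<Rightarrow> 's::countable"
  assumes "1 \<le> j" "1 \<le> i" "i \<le> H + 1" "j < k \<or> (j = k \<and> opos i OS < p)"
  shows "S j i \<in> hist_sigma M H S A R C k p \<rightarrow>\<^sub>M count_space UNIV"
proof -
  have "S j i -` {s} \<inter> space M \<in> sets (hist_sigma M H S A R C k p)" for s
    using assms by (intro obs_gen_in_hist_sigma[of _ M S A R C j i OS]) (auto simp: obs_gen_def ovalid_def)
  then show ?thesis
    by (subst measurable_count_space_eq2_countable) auto
qed

lemma measurable_A_hist_sigma:
  fixes A :: "nat \<Rightarrow> nat \<Rightarrow> 'x \<Rightarrow> 'a::countable"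
  assumes "1 \<le> j" "1 \<le> i" "i \<le> H" "j < k \<or> (j = k \<and> opos i OA < p)"
  shows "A j i \<in> hist_sigma M H S A R C k p \<rightarrow>\<^sub>M count_space UNIV"
proof -
  have "A j i -` {a} \<inter> space M \<in> sets (hist_sigma M H S A R C k p)" for a
    using assms by (intro obs_gen_in_hist_sigma[of _ M S A R C j i OA]) (auto simp: obs_gen_def ovalid_def)
  then show ?thesis
    by (subst measurable_count_space_eq2_countable) auto
qed

lemma measurable_R_hist_sigma:
  assumes "1 \<le> j" "1 \<le> i" "i \<le> H" "j < k \<or> (j = k \<and> opos i OR < p)"
  shows "R j i \<in> borel_measurable (hist_sigma M H S A R C k p)"
proof (rule measurableI)
  fix B :: "real set" assume "B \<in> sets borel"
  then show "R j i -` B \<inter> space (hist_sigma M H S A R C k p) \<in> sets (hist_sigma M H S A R C k p)"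
    using assms by (simp, intro obs_gen_in_hist_sigma[of _ M S A R C j i OR]) (auto simp: obs_gen_def ovalid_def)
qed simp

lemma measurable_Vaux:
  fixes g :: "'x \<Rightarrow> nat \<Rightarrow> 's::finite \<Rightarrow> 'a::finite \<Rightarrow> real" and Q :: "'x \<Rightarrow> nat \<Rightarrow> 's \<Rightarrow> 'a \<Rightarrow> 's \<Rightarrow> real"
  assumes [measurable]: "\<And>h s a. (\<lambda>\<omega>. g \<omega> h s a) \<in> borel_measurable N"
    "\<And>h s a s'. (\<lambda>\<omega>. Q \<omega> h s a s') \<in> borel_measurable N"
  shows "(\<lambda>\<omega>. Vaux m \<pi> (g \<omega>) (Q \<omega>) h s) \<in> borel_measurable N"
proof (induction m arbitrary: h s)
  case (Suc m)
  note Suc.IH [measurable]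
  show ?case
    unfolding Vaux.simps by measurable
qed simp

lemma Ncnt_eq_sum:
  "real (Ncnt Sd Ad k h s a) = (\<Sum>j\<in>{1..<k}. if Sd j h = s \<and> Ad j h = a then 1 else 0)"
  by (simp add: Ncnt_def sum.inter_filter[symmetric])

lemma ghat_eq_sum:
  "ghat Gd Sd Ad k h s a =
     (\<Sum>j\<in>{1..<k}. if Sd j h = s \<and> Ad j h = a then Gd j h else 0) / max 1 (real (Ncnt Sd Ad k h s a))"
proof -
  have "(\<Sum>j\<in>{j \<in> {1..<k}. Sd j h = s \<and> Ad j h = a}. Gd j h)
      = (\<Sum>j\<in>{1..<k}. if Sd j h = s \<and> Ad j h = a then Gd j h else 0)"
    by (rule sum.inter_filter) simp
  then show ?thesis
    by (simp only: ghat_def of_nat_max of_nat_1)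
qed

section \<open>The sampling model\<close>

lemma confidence_budget:
  assumes "1 \<le> nS" "1 \<le> nA" "1 \<le> H" "1 \<le> K" "0 < \<delta>" "\<delta> < 1"
  defines "Z \<equiv> ln (16 * real nS ^ 2 * real nA * real H * real K / \<delta>)"
  shows "1 \<le> Z" "real (H * nS * nA * K) * exp (- Z) + real (H * nS * nA * nS * K) * exp (- Z) \<le> \<delta>"
proof -
  define D where "D = 16 * real nS ^ 2 * real nA * real H * real K"
  have "16 \<le> D"
    using assms(1-4) by (simp add: D_def mult_ge1_I)
  moreover have "D \<le> D / \<delta>"
    using assms(5,6) \<open>16 \<le> D\<close> by (simp add: field_simps)
  ultimately have D: "16 \<le> D / \<delta>" "Z = ln (D / \<delta>)"
    by (simp_all add: Z_def D_def)
  have "exp 1 \<le> D / \<delta>"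
    using exp_le D(1) by linarith
  then show "1 \<le> Z"
    using D by (simp add: ln_ge_iff)
  have "D * exp (- Z) = \<delta>"
    using D assms(5) \<open>16 \<le> D\<close> by (simp add: exp_minus)
  moreover have "real (H * nS * nA * K) + real (H * nS * nA * nS * K) \<le> D"
    using assms(1-4) by (simp add: D_def power2_eq_square mult_ac mult_right_mono)
  then have "(real (H * nS * nA * K) + real (H * nS * nA * nS * K)) * exp (- Z) \<le> D * exp (- Z)"
    by (intro mult_right_mono) auto
  ultimately show "real (H * nS * nA * K) * exp (- Z) + real (H * nS * nA * nS * K) * exp (- Z) \<le> \<delta>"
    by (simp add: distrib_right)
qed

locale episodic_sampling = prob_space M for M :: "'x measure" +
  fixes H K :: nat
    and S :: "nat \<Rightarrow> nat \<Rightarrow> 'x \<Rightarrow> 's::finite" and A :: "nat \<Rightarrow> nat \<Rightarrow> 'x \<Rightarrow> 'a::finite"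
    and R C :: "nat \<Rightarrow> nat \<Rightarrow> 'x \<Rightarrow> real"
    and r :: "nat \<Rightarrow> 's \<Rightarrow> 'a \<Rightarrow> real" and P :: "nat \<Rightarrow> 's \<Rightarrow> 'a \<Rightarrow> 's pmf"
  assumes measurable_S [measurable]: "\<And>k h. S k h \<in> M \<rightarrow>\<^sub>M count_space UNIV"
    and measurable_A [measurable]: "\<And>k h. A k h \<in> M \<rightarrow>\<^sub>M count_space UNIV"
    and measurable_R [measurable]: "\<And>k h. R k h \<in> borel_measurable M"
    and measurable_C: "\<And>k h. C k h \<in> borel_measurable M"
    and reward_noise_mgf: "\<And>k h l. k \<in> {1..K} \<Longrightarrow> h \<in> {1..H} \<Longrightarrow>
      AE \<omega> in M. nn_cond_exp M (hist_sigma M H S A R C k (opos h OR))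
        (\<lambda>\<omega>. ennreal (exp (l * (R k h \<omega> - r h (S k h \<omega>) (A k h \<omega>))))) \<omega> \<le> ennreal (exp (l\<^sup>2 / 4))"
    and transition_prob: "\<And>k h s'. k \<in> {1..K} \<Longrightarrow> h \<in> {1..H} \<Longrightarrow>
      AE \<omega> in M. real_cond_exp M (hist_sigma M H S A R C k (opos (Suc h) OS))
        (indicator {\<omega>\<in>space M. S k (Suc h) \<omega> = s'}) \<omega> = pmf (P h (S k h \<omega>) (A k h \<omega>)) s'"
begin

abbreviation hist :: "nat \<Rightarrow> nat \<Rightarrow> 'x measure" where
  "hist \<equiv> hist_sigma M H S A R C"

lemma subalgebra_hist: "subalgebra M (hist k p)"
proof -
  have "obs_gen M S A R C j i t \<subseteq> sets M" for j i t
    using measurable_C by (cases t) (auto simp: obs_gen_def)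
  then have "sets (hist k p) \<subseteq> sets M"
    unfolding sets_hist_sigma by (intro sets.sigma_sets_subset) blast+
  then show ?thesis
    by (simp add: subalgebra_def)
qed

lemma measurable_visit_hist:
  assumes "h \<in> {1..H}" "1 \<le> i" "i < j \<or> (i = j \<and> opos h OA < p)"
  shows "Measurable.pred (hist j p) (\<lambda>\<omega>. S i h \<omega> = s \<and> A i h \<omega> = a)"
proof -
  have [measurable]: "S i h \<in> hist j p \<rightarrow>\<^sub>M count_space UNIV" "A i h \<in> hist j p \<rightarrow>\<^sub>M count_space UNIV"
    using assms by (auto intro!: measurable_S_hist_sigma measurable_A_hist_sigma simp: opos_def)
  show ?thesis
    by measurable
qed

lemma reward_visit_filtration:
  assumes h: "h \<in> {1..H}"
  shows "visit_filtration M K (\<lambda>j. hist j (opos h OR)) (\<lambda>j \<omega>. S j h \<omega> = s \<and> A j h \<omega> = a)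
    (\<lambda>j \<omega>. R j h \<omega> - r h (S j h \<omega>) (A j h \<omega>))"
proof
  fix j assume j: "j \<in> {1..<K}"
  interpret sigma_finite_subalgebra M "hist j (opos h OR)"
    by (rule sigma_finite_subalgebra_of_subalgebra[OF subalgebra_hist])
  show "cond_subgaussian M (hist j (opos h OR)) (\<lambda>\<omega>. R j h \<omega> - r h (S j h \<omega>) (A j h \<omega>))"
    using j h reward_noise_mgf
    by (intro cond_subgaussianI) (auto intro!: borel_measurable_diff borel_measurable_countable_comp2)
  fix i
  show "Measurable.pred (hist j (opos h OR)) (\<lambda>\<omega>. S i h \<omega> = s \<and> A i h \<omega> = a)" if "i \<in> {1..j}"
    using that h by (intro measurable_visit_hist) (auto simp: opos_def)
  assume "i \<in> {1..<j}"
  then show "(\<lambda>\<omega>. R i h \<omega> - r h (S i h \<omega>) (A i h \<omega>)) \<in> borel_measurable (hist j (opos h OR))"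
    using h by (intro borel_measurable_diff borel_measurable_countable_comp2 measurable_R_hist_sigma
        measurable_S_hist_sigma measurable_A_hist_sigma) auto
qed (auto simp: subalgebra_hist intro!: borel_measurable_countable_comp2)

lemma transition_visit_filtration:
  assumes h: "h \<in> {1..H}"
  shows "visit_filtration M K (\<lambda>j. hist j (opos (Suc h) OS)) (\<lambda>j \<omega>. S j h \<omega> = s \<and> A j h \<omega> = a)
    (\<lambda>j \<omega>. (if S j (Suc h) \<omega> = s' then 1 else 0) - pmf (P h (S j h \<omega>) (A j h \<omega>)) s')"
proof
  fix j assume j: "j \<in> {1..<K}"
  have "(\<lambda>\<omega>. pmf (P h (S j h \<omega>) (A j h \<omega>)) s') \<in> borel_measurable (hist j (opos (Suc h) OS))"
    using h j by (intro borel_measurable_countable_comp2 measurable_S_hist_sigma measurable_A_hist_sigma)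
      (auto simp: opos_def)
  then show "cond_subgaussian M (hist j (opos (Suc h) OS))
      (\<lambda>\<omega>. (if S j (Suc h) \<omega> = s' then 1 else 0) - pmf (P h (S j h \<omega>) (A j h \<omega>)) s')"
    using j h transition_prob subalgebra_hist
    by (intro cond_subgaussian_centered_indicator) (auto simp: pmf_le_1)
  fix i
  show "Measurable.pred (hist j (opos (Suc h) OS)) (\<lambda>\<omega>. S i h \<omega> = s \<and> A i h \<omega> = a)" if "i \<in> {1..j}"
    using that h by (intro measurable_visit_hist) (auto simp: opos_def)
  assume "i \<in> {1..<j}"
  then have [measurable]: "S i (Suc h) \<in> hist j (opos (Suc h) OS) \<rightarrow>\<^sub>M count_space UNIV"
    and "(\<lambda>\<omega>. pmf (P h (S i h \<omega>) (A i h \<omega>)) s') \<in> borel_measurable (hist j (opos (Suc h) OS))"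
    using h by (auto intro!: measurable_S_hist_sigma borel_measurable_countable_comp2
        measurable_S_hist_sigma measurable_A_hist_sigma)
  then show "(\<lambda>\<omega>. (if S i (Suc h) \<omega> = s' then 1 else 0) - pmf (P h (S i h \<omega>) (A i h \<omega>)) s')
      \<in> borel_measurable (hist j (opos (Suc h) OS))"
    by measurable
qed (auto simp: subalgebra_hist intro!: borel_measurable_countable_comp2)

lemma reward_lower_concentrated_whp:
  assumes "0 < Z"
  shows "\<exists>U\<in>sets M. measure M U \<le> real (H * CARD('s) * CARD('a) * K) * exp (- Z) \<and>
    (\<forall>\<omega>\<in>space M - U. \<forall>h\<in>{1..H}. \<forall>k\<le>K. \<forall>s a.
       lower_concentrated Z (\<lambda>j i. R j i \<omega>) (\<lambda>j i. S j i \<omega>) (\<lambda>j i. A j i \<omega>) k h s a (r h s a))"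
proof -
  let ?T = "{1..H} \<times> (UNIV :: 's set) \<times> (UNIV :: 'a set)"
  have "\<exists>U\<in>sets M. measure M U \<le> real (card ?T * K) * exp (- Z) \<and>
    (\<forall>\<omega>\<in>space M - U. \<forall>t\<in>?T. \<forall>k\<le>K.
       - sqrt (real (card {j \<in> {1..<k}. (case t of (h, s, a) \<Rightarrow> S j h \<omega> = s \<and> A j h \<omega> = a)}) * Z)
       \<le> (\<Sum>j\<in>{j \<in> {1..<k}. (case t of (h, s, a) \<Rightarrow> S j h \<omega> = s \<and> A j h \<omega> = a)}.
             case t of (h, s, a) \<Rightarrow> R j h \<omega> - r h (S j h \<omega>) (A j h \<omega>)))"
    by (rule visit_sums_bounded_whp[where G = "\<lambda>(h, s, a) j. hist j (opos h OR)"])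
      (use reward_visit_filtration assms in auto)
  then obtain U where U: "U \<in> sets M" "measure M U \<le> real (card ?T * K) * exp (- Z)"
    and bound: "\<forall>\<omega>\<in>space M - U. \<forall>t\<in>?T. \<forall>k\<le>K.
       - sqrt (real (card {j \<in> {1..<k}. (case t of (h, s, a) \<Rightarrow> S j h \<omega> = s \<and> A j h \<omega> = a)}) * Z)
       \<le> (\<Sum>j\<in>{j \<in> {1..<k}. (case t of (h, s, a) \<Rightarrow> S j h \<omega> = s \<and> A j h \<omega> = a)}.
             case t of (h, s, a) \<Rightarrow> R j h \<omega> - r h (S j h \<omega>) (A j h \<omega>))"
    by blast
  have "lower_concentrated Z (\<lambda>j i. R j i \<omega>) (\<lambda>j i. S j i \<omega>) (\<lambda>j i. A j i \<omega>) k h s a (r h s a)"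
    if "\<omega> \<in> space M - U" "h \<in> {1..H}" "k \<le> K" for \<omega> h k s a
  proof -
    let ?V = "{j \<in> {1..<k}. S j h \<omega> = s \<and> A j h \<omega> = a}"
    have "(\<Sum>j\<in>?V. R j h \<omega> - r h (S j h \<omega>) (A j h \<omega>)) = (\<Sum>j\<in>?V. R j h \<omega> - r h s a)"
      by (rule sum.cong) auto
    then show ?thesis
      using bound[rule_format, OF that(1), of "(h, s, a)" k] that
      by (simp add: lower_concentrated_def Ncnt_eq_card_visits visits_def)
  qed
  then show ?thesis
    using U by (intro bexI[of _ U]) (auto simp: card_cartesian_product)
qed

lemma transition_lower_concentrated_whp:
  assumes "0 < Z"
  shows "\<exists>U\<in>sets M. measure M U \<le> real (H * CARD('s) * CARD('a) * CARD('s) * K) * exp (- Z) \<and>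
    (\<forall>\<omega>\<in>space M - U. \<forall>h\<in>{1..H}. \<forall>k\<le>K. \<forall>s a s'.
       lower_concentrated Z (\<lambda>j i. if S j (Suc i) \<omega> = s' then 1 else 0) (\<lambda>j i. S j i \<omega>) (\<lambda>j i. A j i \<omega>)
         k h s a (kern P h s a s'))"
proof -
  let ?T = "{1..H} \<times> (UNIV :: 's set) \<times> (UNIV :: 'a set) \<times> (UNIV :: 's set)"
  have "\<exists>U\<in>sets M. measure M U \<le> real (card ?T * K) * exp (- Z) \<and>
    (\<forall>\<omega>\<in>space M - U. \<forall>t\<in>?T. \<forall>k\<le>K.
       - sqrt (real (card {j \<in> {1..<k}. (case t of (h, s, a, s') \<Rightarrow> S j h \<omega> = s \<and> A j h \<omega> = a)}) * Z)
       \<le> (\<Sum>j\<in>{j \<in> {1..<k}. (case t of (h, s, a, s') \<Rightarrow> S j h \<omega> = s \<and> A j h \<omega> = a)}.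
             case t of (h, s, a, s') \<Rightarrow>
               (if S j (Suc h) \<omega> = s' then 1 else 0) - pmf (P h (S j h \<omega>) (A j h \<omega>)) s'))"
    by (rule visit_sums_bounded_whp[where G = "\<lambda>(h, s, a, s') j. hist j (opos (Suc h) OS)"])
      (use transition_visit_filtration assms in auto)
  then obtain U where U: "U \<in> sets M" "measure M U \<le> real (card ?T * K) * exp (- Z)"
    and bound: "\<forall>\<omega>\<in>space M - U. \<forall>t\<in>?T. \<forall>k\<le>K.
       - sqrt (real (card {j \<in> {1..<k}. (case t of (h, s, a, s') \<Rightarrow> S j h \<omega> = s \<and> A j h \<omega> = a)}) * Z)
       \<le> (\<Sum>j\<in>{j \<in> {1..<k}. (case t of (h, s, a, s') \<Rightarrow> S j h \<omega> = s \<and> A j h \<omega> = a)}.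
             case t of (h, s, a, s') \<Rightarrow>
               (if S j (Suc h) \<omega> = s' then 1 else 0) - pmf (P h (S j h \<omega>) (A j h \<omega>)) s')"
    by blast
  have "lower_concentrated Z (\<lambda>j i. if S j (Suc i) \<omega> = s' then 1 else 0) (\<lambda>j i. S j i \<omega>) (\<lambda>j i. A j i \<omega>)
      k h s a (kern P h s a s')"
    if "\<omega> \<in> space M - U" "h \<in> {1..H}" "k \<le> K" for \<omega> h k s a s'
  proof -
    let ?V = "{j \<in> {1..<k}. S j h \<omega> = s \<and> A j h \<omega> = a}"
    have "(\<Sum>j\<in>?V. (if S j (Suc h) \<omega> = s' then 1 else 0) - pmf (P h (S j h \<omega>) (A j h \<omega>)) s')
        = (\<Sum>j\<in>?V. (if S j (Suc h) \<omega> = s' then 1 else 0) - kern P h s a s')"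
      by (rule sum.cong) (auto simp: kern_def)
    then show ?thesis
      using bound[rule_format, OF that(1), of "(h, s, a, s')" k] that
      by (simp add: lower_concentrated_def Ncnt_eq_card_visits visits_def)
  qed
  then show ?thesis
    using U by (intro bexI[of _ U]) (auto simp: card_cartesian_product)
qed

lemma measurable_Vr_hat:
  "(\<lambda>\<omega>. Vr_hat H K \<delta> (\<lambda>j i. S j i \<omega>) (\<lambda>j i. A j i \<omega>) (\<lambda>j i. R j i \<omega>) \<mu> k \<pi>) \<in> borel_measurable M"
proof -
  have [measurable]: "(\<lambda>\<omega>. Vaux m \<pi> (rtilde H K \<delta> (\<lambda>j i. S j i \<omega>) (\<lambda>j i. A j i \<omega>) (\<lambda>j i. R j i \<omega>) k)
      (Phat (\<lambda>j i. S j i \<omega>) (\<lambda>j i. A j i \<omega>) k) h s) \<in> borel_measurable M" for m h s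
    by (rule measurable_Vaux)
      (simp_all only: rtilde_def Phat_eq_ghat ghat_eq_sum beta_def of_nat_max Ncnt_eq_sum, measurable)
  show ?thesis
    unfolding Vr_hat_def V1_def Vh_def by measurable
qed

lemma optimism_whp:
  assumes "1 \<le> H" "1 \<le> K" "0 < \<delta>" "\<delta> < 1"
    and r_range: "\<forall>h\<in>{1..H}. \<forall>s a. 0 \<le> r h s a \<and> r h s a \<le> 1"
  obtains U where "U \<in> sets M" "measure M U \<le> \<delta>"
    "\<And>\<omega> k \<pi>. \<omega> \<in> space M - U \<Longrightarrow> k \<le> K \<Longrightarrow>
      V1 H \<pi> r (kern P) \<mu> \<le> Vr_hat H K \<delta> (\<lambda>j i. S j i \<omega>) (\<lambda>j i. A j i \<omega>) (\<lambda>j i. R j i \<omega>) \<mu> k \<pi>"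
proof -
  define Z where "Z = ln (16 * real CARD('s) ^ 2 * real CARD('a) * real H * real K / \<delta>)"
  have Z: "1 \<le> Z" and budget:
    "real (H * CARD('s) * CARD('a) * K) * exp (- Z) + real (H * CARD('s) * CARD('a) * CARD('s) * K) * exp (- Z) \<le> \<delta>"
    using confidence_budget[of "CARD('s)" "CARD('a)" H K \<delta>] assms(1-4) by (simp_all add: Z_def Suc_le_eq)
  obtain U1 where U1: "U1 \<in> sets M" "measure M U1 \<le> real (H * CARD('s) * CARD('a) * K) * exp (- Z)"
    and conc_r: "\<forall>\<omega>\<in>space M - U1. \<forall>h\<in>{1..H}. \<forall>k\<le>K. \<forall>s a.
       lower_concentrated Z (\<lambda>j i. R j i \<omega>) (\<lambda>j i. S j i \<omega>) (\<lambda>j i. A j i \<omega>) k h s a (r h s a)"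
    using reward_lower_concentrated_whp[of Z] Z by auto
  obtain U2 where U2: "U2 \<in> sets M" "measure M U2 \<le> real (H * CARD('s) * CARD('a) * CARD('s) * K) * exp (- Z)"
    and conc_P: "\<forall>\<omega>\<in>space M - U2. \<forall>h\<in>{1..H}. \<forall>k\<le>K. \<forall>s a s'.
       lower_concentrated Z (\<lambda>j i. if S j (Suc i) \<omega> = s' then 1 else 0) (\<lambda>j i. S j i \<omega>) (\<lambda>j i. A j i \<omega>)
         k h s a (kern P h s a s')"
    using transition_lower_concentrated_whp[of Z] Z by auto
  have "measure M (U1 \<union> U2) \<le> \<delta>"
    using measure_Un_le[OF U1(1) U2(1)] U1(2) U2(2) budget by linarith
  moreover have "V1 H \<pi> r (kern P) \<mu> \<le> Vr_hat H K \<delta> (\<lambda>j i. S j i \<omega>) (\<lambda>j i. A j i \<omega>) (\<lambda>j i. R j i \<omega>) \<mu> k \<pi>"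
    if "\<omega> \<in> space M - (U1 \<union> U2)" "k \<le> K" for \<omega> k \<pi>
    using conc_r conc_P that by (intro V1_le_Vr_hat[OF Z_def Z r_range]) auto
  ultimately show thesis
    using U1(1) U2(1) by (intro that[of "U1 \<union> U2"]) auto
qed

end

theorem lemma5p8:
  fixes M :: "'x measure"
    and S :: "nat \<Rightarrow> nat \<Rightarrow> 'x \<Rightarrow> 's::finite"
    and A :: "nat \<Rightarrow> nat \<Rightarrow> 'x \<Rightarrow> 'a::finite"
    and R Cst :: "nat \<Rightarrow> nat \<Rightarrow> 'x \<Rightarrow> real"
    and pol :: "nat \<Rightarrow> 'x \<Rightarrow> ('s, 'a) policy"
    and P :: "nat \<Rightarrow> 's \<Rightarrow> 'a \<Rightarrow> 's pmf"
    and r c :: "nat \<Rightarrow> 's \<Rightarrow> 'a \<Rightarrow> real"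
    and \<mu> :: "'s pmf"
    and H K :: nat
    and \<tau> c0 \<delta> :: real
    and pstar :: "nat \<Rightarrow> ('s, 'a) policy"
  assumes M: "prob_space M"
    and H: "1 \<le> H" and K: "1 \<le> K"
    and tau: "0 < \<tau>" "\<tau> \<le> real H"
    and delta: "0 < \<delta>" "\<delta> < 1"
    and r_range: "\<forall>h\<in>{1..H}. \<forall>s a. 0 \<le> r h s a \<and> r h s a \<le> 1"
    and c_range: "\<forall>h\<in>{1..H}. \<forall>s a. 0 \<le> c h s a \<and> c h s a \<le> 1"
    and pi0: "\<exists>\<pi>0. V1 H \<pi>0 c (kern P) \<mu> = c0" and c0: "c0 < \<tau>"
    and meas_S: "\<forall>k h. S k h \<in> M \<rightarrow>\<^sub>M count_space UNIV"
    and meas_A: "\<forall>k h. A k h \<in> M \<rightarrow>\<^sub>M count_space UNIV"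
    and meas_R: "\<forall>k h. R k h \<in> borel_measurable M"
    and meas_C: "\<forall>k h. Cst k h \<in> borel_measurable M"
    and pol_adapted: "\<forall>k h s a. (\<lambda>\<omega>. pmf (pol k \<omega> h s) a)
                         \<in> borel_measurable (hist_sigma M H S A R Cst k 0)"
    and init: "\<forall>k\<in>{1..K}. \<forall>s. AE \<omega> in M.
        real_cond_exp M (hist_sigma M H S A R Cst k (opos 1 OS))
          (indicator {\<omega>\<in>space M. S k 1 \<omega> = s}) \<omega> = pmf \<mu> s"
    and act: "\<forall>k\<in>{1..K}. \<forall>h\<in>{1..H}. \<forall>a. AE \<omega> in M.
        real_cond_exp M (hist_sigma M H S A R Cst k (opos h OA))
          (indicator {\<omega>\<in>space M. A k h \<omega> = a}) \<omega> = pmf (pol k \<omega> h (S k h \<omega>)) a"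
    and rew_noise: "\<forall>k\<in>{1..K}. \<forall>h\<in>{1..H}.
        integrable M (\<lambda>\<omega>. R k h \<omega> - r h (S k h \<omega>) (A k h \<omega>))
        \<and> (AE \<omega> in M. real_cond_exp M (hist_sigma M H S A R Cst k (opos h OR))
               (\<lambda>\<omega>. R k h \<omega> - r h (S k h \<omega>) (A k h \<omega>)) \<omega> = 0)
        \<and> (\<forall>l::real. AE \<omega> in M. nn_cond_exp M (hist_sigma M H S A R Cst k (opos h OR))
               (\<lambda>\<omega>. ennreal (exp (l * (R k h \<omega> - r h (S k h \<omega>) (A k h \<omega>))))) \<omega>
             \<le> ennreal (exp (l\<^sup>2 / 4)))"
    and cost_noise: "\<forall>k\<in>{1..K}. \<forall>h\<in>{1..H}.
        integrable M (\<lambda>\<omega>. Cst k h \<omega> - c h (S k h \<omega>) (A k h \<omega>))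
        \<and> (AE \<omega> in M. real_cond_exp M (hist_sigma M H S A R Cst k (opos h OC))
               (\<lambda>\<omega>. Cst k h \<omega> - c h (S k h \<omega>) (A k h \<omega>)) \<omega> = 0)
        \<and> (\<forall>l::real. AE \<omega> in M. nn_cond_exp M (hist_sigma M H S A R Cst k (opos h OC))
               (\<lambda>\<omega>. ennreal (exp (l * (Cst k h \<omega> - c h (S k h \<omega>) (A k h \<omega>))))) \<omega>
             \<le> ennreal (exp (l\<^sup>2 / 4)))"
    and trans: "\<forall>k\<in>{1..K}. \<forall>h\<in>{1..H}. \<forall>s'. AE \<omega> in M.
        real_cond_exp M (hist_sigma M H S A R Cst k (opos (Suc h) OS))
          (indicator {\<omega>\<in>space M. S k (Suc h) \<omega> = s'}) \<omega> = pmf (P h (S k h \<omega>) (A k h \<omega>)) s'"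
    and alg: "\<forall>\<omega>\<in>space M. \<forall>k\<in>{1..K}. \<forall>\<pi>.
        alg_obj H K \<delta> \<tau> c0 (\<lambda>j i. S j i \<omega>) (\<lambda>j i. A j i \<omega>) (\<lambda>j i. R j i \<omega>) (\<lambda>j i. Cst j i \<omega>)
            \<mu> (\<lambda>j. pol j \<omega>) k \<pi>
        \<le> alg_obj H K \<delta> \<tau> c0 (\<lambda>j i. S j i \<omega>) (\<lambda>j i. A j i \<omega>) (\<lambda>j i. R j i \<omega>) (\<lambda>j i. Cst j i \<omega>)
            \<mu> (\<lambda>j. pol j \<omega>) k (pol k \<omega>)"
    and opt: "\<forall>k\<in>{Cpp CARD('s) CARD('a) H \<delta> \<tau> c0..K}.
        V1 H (pstar k) c (kern P) \<mu> + eps CARD('s) CARD('a) H \<delta> k \<le> \<tau>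
        \<and> (\<forall>\<pi>. V1 H \<pi> c (kern P) \<mu> + eps CARD('s) CARD('a) H \<delta> k \<le> \<tau>
               \<longrightarrow> V1 H \<pi> r (kern P) \<mu> \<le> V1 H (pstar k) r (kern P) \<mu>)"
  shows "measure M {\<omega>\<in>space M.
           (\<Sum>k\<in>{Cpp CARD('s) CARD('a) H \<delta> \<tau> c0..K}.
              V1 H (pstar k) r (kern P) \<mu>
              - Vr_hat H K \<delta> (\<lambda>j i. S j i \<omega>) (\<lambda>j i. A j i \<omega>) (\<lambda>j i. R j i \<omega>) \<mu> k (pstar k)) \<le> 0}
         \<ge> 1 - \<delta>"
proof -
  interpret episodic_sampling M H K S A R Cst r P
    by (rule episodic_sampling.intro[OF M], unfold_locales)
      (simp_all add: meas_S meas_A meas_R meas_C rew_noise trans)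
  obtain U where U: "U \<in> sets M" "measure M U \<le> \<delta>"
    and optimistic: "\<And>\<omega> k \<pi>. \<omega> \<in> space M - U \<Longrightarrow> k \<le> K \<Longrightarrow>
      V1 H \<pi> r (kern P) \<mu> \<le> Vr_hat H K \<delta> (\<lambda>j i. S j i \<omega>) (\<lambda>j i. A j i \<omega>) (\<lambda>j i. R j i \<omega>) \<mu> k \<pi>"
    using optimism_whp[OF H K delta r_range, where \<mu> = \<mu>] by metis
  let ?T = "{\<omega>\<in>space M. (\<Sum>k\<in>{Cpp CARD('s) CARD('a) H \<delta> \<tau> c0..K}. V1 H (pstar k) r (kern P) \<mu>
      - Vr_hat H K \<delta> (\<lambda>j i. S j i \<omega>) (\<lambda>j i. A j i \<omega>) (\<lambda>j i. R j i \<omega>) \<mu> k (pstar k)) \<le> 0}"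
  have "space M - U \<subseteq> ?T"
    using optimistic by (auto intro!: sum_nonpos)
  moreover have "?T \<in> sets M"
    using measurable_Vr_hat by measurable
  ultimately have "measure M (space M - U) \<le> measure M ?T"
    by (intro finite_measure_mono)
  then show ?thesis
    using U prob_compl[of U] by simp
qed

end
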